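(* For every integer $k\ge2$ there are isomorphisms of 2-species $$\mathcal C^\bullet_k\cong \mathcal C^\bullet_{k-1}\cdot\big(\mathbb E\circ(\mathcal C^\bullet_{k-1}+\mathcal C^\times_{k-1})\big),\qquad \mathcal C^\times_k\cong\big((\mathbb E-1)\circ\mathcal C^\times_{k-1}\big)\cdot\big(\mathbb E\circ\mathcal C^\bullet_{k-1}\big),$$ $$\mathcal C^\ell_{k-1}\cong \mathcal C^\bullet_k+\mathcal C^\times_k,$$ and for every $k\ge1$ there is an isomorphism $\mathcal C_k\cong(\mathbb E-1)\circ(\mathcal C^\bullet_k+\mathcal C^\times_k)$.
   Context: Let $V_1,V_2$ be disjoint finite sets, $V=V_1\sqcup V_2$. A semi-pointed partition of $(V_1,V_2)$ is a set partition of $V$ into nonempty blocks in which each block $B$ is either unpointed or pointed at one chosen element of $B\cap V_1$, subject to: a block contained in $V_1$ must be pointed, and a block contained in $V_2$ must be unpointed. $\Pi(V_1,V_2)$ is the set of semi-pointed partitions, ordered by: $P\le Q$ iff every block $b$ of $P$ is a union $q_1\cup\dots\cup q_r$ of blocks of $Q$, and if $b$ is pointed at $e$ then some $q_i$ is pointed at $e$, while if $b$ is unpointed then some $q_i$ is unpointed. Its greatest element $\hat1$ is the partition into singletons. Its minimal elements are the one-block partitions $m_v$, $v\in V_1$ (block $V$ pointed at $v$), and $m_\times$ (the unpointed block $V$, present when $V_2\neq\emptyset$). A $k$-multichain is a sequence $a_1\le\dots\le a_k$. A 2-species is a functor from pairs of finite sets with pairs of bijections to finite sets. Sum and product are defined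 by $(\mathcal F+\mathcal G)(I_1,I_2)=\mathcal F(I_1,I_2)\sqcup\mathcal G(I_1,I_2)$ and $(\mathcal F\cdot\mathcal G)(I,J)=\bigsqcup_{I=I_1\sqcup I_2,\,J=J_1\sqcup J_2}\mathcal F(I_1,J_1)\times\mathcal G(I_2,J_2)$. For a species $\mathcal E$ and a 2-species $\mathcal F$ with $\mathcal F(\emptyset,\emptyset)=\emptyset$, the substitution is $(\mathcal E\circ\mathcal F)(I_1,I_2)=\bigsqcup_{\pi}\mathcal E(\pi)\times\prod_{J\in\pi}\mathcal F(J\cap I_1,J\cap I_2)$, where $\pi$ runs over the set partitions of $I_1\sqcup I_2$. $\mathbb E$ is the species of sets ($\mathbb E(V)=\{V\}$), and $\mathbb E-1$ is the species of nonempty sets. For $k\ge1$ the 2-species are as follows: - $\mathcal C_k(V_1,V_2)$ is the set of $k$-multichains in $\Pi(V_1,V_2)$, empty when $V_1=V_2=\emptyset$; - $\mathcal C^\bullet_k(V_1,V_2)$ is the set of those $k$-multichains whose first element is some $m_v$; - $\mathcal C^\times_k(V_1,V_2)$ is the set of those whose first element is $m_\times$; - $\mathcal C^\ell_k(V_1,V_2)$ is the set of pairs $(m,c)$ with $m$ a minimal element of $\Pi(V_1,V_2)$ and $c$ a $k$-multichain in the interval $[m,\hat1]$. *)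

theory Defs
  imports Main
begin

text \<open>A 2-species is represented by its carrier
  (V1 V2 \<mapsto> set of structures on (V1,V2)) together with its transport of structures
  along a relabelling function sigma (only the restriction of sigma to V1 \<union> V2 matters).\<close>

type_synonym ('a, 's) species = "('a set \<Rightarrow> 'a set \<Rightarrow> 's set) \<times> (('a \<Rightarrow> 'a) \<Rightarrow> 's \<Rightarrow> 's)"

definition admissible :: "'a set \<Rightarrow> 'a set \<Rightarrow> bool" where
  "admissible V1 V2 \<longleftrightarrow> finite V1 \<and> finite V2 \<and> V1 \<inter> V2 = {}"

definition species_iso :: "('a, 's) species \<Rightarrow> ('a, 't) species \<Rightarrow> bool" where
  "species_iso F G \<longleftrightarrow>
     (\<exists>\<phi> :: 'a set \<Rightarrow> 'a set \<Rightarrow> 's \<Rightarrow> 't.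
        (\<forall>V1 V2. admissible V1 V2 \<longrightarrow> bij_betw (\<phi> V1 V2) (fst F V1 V2) (fst G V1 V2)) \<and>
        (\<forall>V1 V2 W1 W2 \<sigma>. admissible V1 V2 \<and> admissible W1 W2 \<and>
            bij_betw \<sigma> V1 W1 \<and> bij_betw \<sigma> V2 W2 \<longrightarrow>
            (\<forall>s \<in> fst F V1 V2. \<phi> W1 W2 (snd F \<sigma> s) = snd G \<sigma> (\<phi> V1 V2 s))))"

definition is_setpart :: "'a set \<Rightarrow> 'a set set \<Rightarrow> bool" where
  "is_setpart V Bs \<longleftrightarrow> (\<forall>B\<in>Bs. B \<noteq> {}) \<and>
     (\<forall>B\<in>Bs. \<forall>B'\<in>Bs. B \<noteq> B' \<longrightarrow> B \<inter> B' = {}) \<and> \<Union>Bs = V"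

definition sp_sum :: "('a, 's) species \<Rightarrow> ('a, 't) species \<Rightarrow> ('a, 's + 't) species" where
  "sp_sum F G = ((\<lambda>V1 V2. Inl ` fst F V1 V2 \<union> Inr ` fst G V1 V2),
                 (\<lambda>\<sigma>. map_sum (snd F \<sigma>) (snd G \<sigma>)))"

definition sp_prod :: "('a, 's) species \<Rightarrow> ('a, 't) species \<Rightarrow> ('a, ('a set \<times> 'a set) \<times> 's \<times> 't) species" where
  "sp_prod F G = ((\<lambda>V1 V2. {((I1, J1), f, g) | I1 J1 f g.
                     I1 \<subseteq> V1 \<and> J1 \<subseteq> V2 \<and> f \<in> fst F I1 J1 \<and> g \<in> fst G (V1 - I1) (V2 - J1)}),
                  (\<lambda>\<sigma> ((I1, J1), f, g). ((\<sigma> ` I1, \<sigma> ` J1), snd F \<sigma> f, snd G \<sigma> g)))"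

text \<open>Substitution E o F: a set partition of V1 \<union> V2 together with an F-structure on each
  block J (on the pair (J \<inter> V1, J \<inter> V2)); encoded as the set of pairs (block, structure).\<close>
definition comp_E_carrier :: "('a, 's) species \<Rightarrow> 'a set \<Rightarrow> 'a set \<Rightarrow> ('a set \<times> 's) set set" where
  "comp_E_carrier F V1 V2 = {S. is_setpart (V1 \<union> V2) (fst ` S) \<and> inj_on fst S \<and>
                             (\<forall>(J, s) \<in> S. s \<in> fst F (J \<inter> V1) (J \<inter> V2))}"

definition comp_E_transport :: "('a, 's) species \<Rightarrow> ('a \<Rightarrow> 'a) \<Rightarrow> ('a set \<times> 's) set \<Rightarrow> ('a set \<times> 's) set" where
  "comp_E_transport F \<sigma> S = (\<lambda>(J, s). (\<sigma> ` J, snd F \<sigma> s)) ` S"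

definition sp_comp_E :: "('a, 's) species \<Rightarrow> ('a, ('a set \<times> 's) set) species" where
  "sp_comp_E F = (comp_E_carrier F, comp_E_transport F)"

text \<open>(E - 1) o F: same, but the partition must be nonempty.\<close>
definition sp_comp_E1 :: "('a, 's) species \<Rightarrow> ('a, ('a set \<times> 's) set) species" where
  "sp_comp_E1 F = ((\<lambda>V1 V2. {S \<in> comp_E_carrier F V1 V2. S \<noteq> {}}), comp_E_transport F)"

text \<open>A block is a pair (B, p): p = None means unpointed, p = Some e means pointed at e.\<close>
type_synonym 'a spp = "('a set \<times> 'a option) set"

definition SPP :: "'a set \<Rightarrow> 'a set \<Rightarrow> 'a spp set" where
  "SPP V1 V2 = {P. is_setpart (V1 \<union> V2) (fst ` P) \<and> inj_on fst P \<and>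
      (\<forall>(B, p) \<in> P. (\<forall>e. p = Some e \<longrightarrow> e \<in> B \<inter> V1) \<and>
                     (B \<subseteq> V1 \<longrightarrow> p \<noteq> None) \<and> (B \<subseteq> V2 \<longrightarrow> p = None))}"

definition sp_le :: "'a spp \<Rightarrow> 'a spp \<Rightarrow> bool" where
  "sp_le P Q \<longleftrightarrow> (\<forall>(b, p) \<in> P. \<exists>Qs \<subseteq> Q. b = \<Union>(fst ` Qs) \<and>
       (case p of Some e \<Rightarrow> (\<exists>q. (q, Some e) \<in> Qs) | None \<Rightarrow> (\<exists>q. (q, None) \<in> Qs)))"

definition hat1 :: "'a set \<Rightarrow> 'a set \<Rightarrow> 'a spp" where
  "hat1 V1 V2 = {({v}, Some v) | v. v \<in> V1} \<union> {({v}, None) | v. v \<in> V2}"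

definition mpt :: "'a set \<Rightarrow> 'a set \<Rightarrow> 'a \<Rightarrow> 'a spp" where
  "mpt V1 V2 v = {(V1 \<union> V2, Some v)}"

definition mcross :: "'a set \<Rightarrow> 'a set \<Rightarrow> 'a spp" where
  "mcross V1 V2 = {(V1 \<union> V2, None)}"

definition minimals :: "'a set \<Rightarrow> 'a set \<Rightarrow> 'a spp set" where
  "minimals V1 V2 = mpt V1 V2 ` V1 \<union> (if V2 \<noteq> {} then {mcross V1 V2} else {})"

definition interval :: "'a set \<Rightarrow> 'a set \<Rightarrow> 'a spp \<Rightarrow> 'a spp \<Rightarrow> 'a spp set" where
  "interval V1 V2 a b = {x \<in> SPP V1 V2. sp_le a x \<and> sp_le x b}"

definition multichain_in :: "'a spp set \<Rightarrow> nat \<Rightarrow> 'a spp list \<Rightarrow> bool" where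
  "multichain_in X k cs \<longleftrightarrow> length cs = k \<and> set cs \<subseteq> X \<and>
      (\<forall>i. Suc i < k \<longrightarrow> sp_le (cs ! i) (cs ! Suc i))"

definition relP :: "('a \<Rightarrow> 'a) \<Rightarrow> 'a spp \<Rightarrow> 'a spp" where
  "relP \<sigma> P = (\<lambda>(B, p). (\<sigma> ` B, map_option \<sigma> p)) ` P"

definition Ck :: "nat \<Rightarrow> ('a, 'a spp list) species" where
  "Ck k = ((\<lambda>V1 V2. if V1 = {} \<and> V2 = {} then {} else {cs. multichain_in (SPP V1 V2) k cs}),
           (\<lambda>\<sigma>. map (relP \<sigma>)))"

definition Cbul :: "nat \<Rightarrow> ('a, 'a spp list) species" where
  "Cbul k = ((\<lambda>V1 V2. {cs. multichain_in (SPP V1 V2) k cs \<and> cs \<noteq> [] \<and>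
                           (\<exists>v \<in> V1. hd cs = mpt V1 V2 v)}),
             (\<lambda>\<sigma>. map (relP \<sigma>)))"

definition Ctimes :: "nat \<Rightarrow> ('a, 'a spp list) species" where
  "Ctimes k = ((\<lambda>V1 V2. {cs. multichain_in (SPP V1 V2) k cs \<and> cs \<noteq> [] \<and>
                           hd cs = mcross V1 V2}),
               (\<lambda>\<sigma>. map (relP \<sigma>)))"

definition Cell :: "nat \<Rightarrow> ('a, 'a spp \<times> 'a spp list) species" where
  "Cell k = ((\<lambda>V1 V2. {(m, c). m \<in> minimals V1 V2 \<and>
                          multichain_in (interval V1 V2 m (hat1 V1 V2)) k c}),
             (\<lambda>\<sigma> (m, c). (relP \<sigma> m, map (relP \<sigma>) c)))"

end

theory Submission
  imports Defs
begin

text \<open>A multichain \<open>a\<^sub>1 \<le> \<dots> \<le> a\<^sub>k\<close> of semi-pointed partitions is the union of its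
  restrictions to the blocks \<open>b\<close> of \<open>a\<^sub>1\<close>, and its restriction to \<open>b\<close> is a multichain on
  \<open>(b \<inter> V1, b \<inter> V2)\<close> whose first element is the one-block partition \<open>{b}\<close>, pointed or not:
  a \<open>C\<^sup>\<bullet>\<^sub>k\<close>- or \<open>C\<^sup>\<times>\<^sub>k\<close>-structure. This gives \<open>C\<^sub>k \<cong> (E - 1) \<circ> (C\<^sup>\<bullet>\<^sub>k + C\<^sup>\<times>\<^sub>k)\<close>.
  A multichain in \<open>C\<^sup>\<bullet>\<^sub>k\<close> (resp. \<open>C\<^sup>\<times>\<^sub>k\<close>) is \<open>m\<^sub>v\<close> (resp. \<open>m\<^sub>\<times>\<close>) followed by a
  \<open>(k - 1)\<close>-multichain whose first element has a block pointed at \<open>v\<close> (resp. an unpointed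
  block). Decomposing that \<open>(k - 1)\<close>-multichain in the same way, the block pointed at \<open>v\<close>
  gives the factor \<open>C\<^sup>\<bullet>\<^sub>k\<^sub>-\<^sub>1\<close> and the other blocks a structure of
  \<open>E \<circ> (C\<^sup>\<bullet>\<^sub>k\<^sub>-\<^sub>1 + C\<^sup>\<times>\<^sub>k\<^sub>-\<^sub>1)\<close>; in the unpointed case the unpointed blocks, of which there is
  at least one, and the pointed blocks give the factors \<open>(E - 1) \<circ> C\<^sup>\<times>\<^sub>k\<^sub>-\<^sub>1\<close> and
  \<open>E \<circ> C\<^sup>\<bullet>\<^sub>k\<^sub>-\<^sub>1\<close>. Finally every element lies below \<open>hat1\<close>, so a pair \<open>(m, c)\<close> in
  \<open>C\<^sup>\<ell>\<^sub>k\<^sub>-\<^sub>1\<close> is just the \<open>k\<close>-multichain \<open>m # c\<close>, which starts at a one-block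
  partition.\<close>

section \<open>Semi-pointed partitions\<close>

lemma SPP_I:
  assumes nonempty: "\<And>B p. (B,p) \<in> P \<Longrightarrow> B \<noteq> {}"
    and overlap: "\<And>B p B' p'. (B,p) \<in> P \<Longrightarrow> (B',p') \<in> P \<Longrightarrow> B \<inter> B' \<noteq> {} \<Longrightarrow> B = B' \<and> p = p'"
    and union: "\<Union>(fst ` P) = V1 \<union> V2"
    and point: "\<And>B p e. (B,p) \<in> P \<Longrightarrow> p = Some e \<Longrightarrow> e \<in> B \<and> e \<in> V1"
    and unpointed: "\<And>B p. (B,p) \<in> P \<Longrightarrow> B \<subseteq> V1 \<Longrightarrow> p \<noteq> None"
    and pointed: "\<And>B p. (B,p) \<in> P \<Longrightarrow> B \<subseteq> V2 \<Longrightarrow> p = None"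
  shows "P \<in> SPP V1 V2"
proof -
  have n: "\<forall>B\<in>fst ` P. B \<noteq> {}"
  proof
    fix B assume "B \<in> fst ` P"
    then obtain p where "(B,p) \<in> P" by force
    then show "B \<noteq> {}" by (rule nonempty)
  qed
  have d: "\<forall>B\<in>fst ` P. \<forall>B'\<in>fst ` P. B \<noteq> B' \<longrightarrow> B \<inter> B' = {}"
  proof (intro ballI impI)
    fix B B' assume "B \<in> fst ` P" "B' \<in> fst ` P" "B \<noteq> B'"
    then obtain p p' where "(B,p) \<in> P" "(B',p') \<in> P" by force
    with overlap \<open>B \<noteq> B'\<close> show "B \<inter> B' = {}" by blast
  qed
  have "is_setpart (V1 \<union> V2) (fst ` P)" unfolding is_setpart_def
    using n d union by blast
  moreover have "inj_on fst P" unfolding inj_on_def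
  proof (intro ballI impI)
    fix x y assume xy: "x \<in> P" "y \<in> P" "fst x = fst y"
    obtain B p B' p' where e: "x = (B,p)" "y = (B',p')" by (cases x, cases y)
    with xy have "B = B'" by simp
    moreover have "B \<noteq> {}" using nonempty xy e by blast
    ultimately have "B \<inter> B' \<noteq> {}" by simp
    with overlap xy e show "x = y" by blast
  qed
  moreover have "\<forall>(B, p) \<in> P. (\<forall>e. p = Some e \<longrightarrow> e \<in> B \<inter> V1) \<and>
                     (B \<subseteq> V1 \<longrightarrow> p \<noteq> None) \<and> (B \<subseteq> V2 \<longrightarrow> p = None)"
  proof
    fix x assume x: "x \<in> P"
    obtain B p where e: "x = (B,p)" by (cases x)
    show "case x of (B, p) \<Rightarrow> (\<forall>e. p = Some e \<longrightarrow> e \<in> B \<inter> V1) \<and>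
                     (B \<subseteq> V1 \<longrightarrow> p \<noteq> None) \<and> (B \<subseteq> V2 \<longrightarrow> p = None)"
      using point[of B p] unpointed[of B p] pointed[of B p] x e by auto
  qed
  ultimately show ?thesis unfolding SPP_def by blast
qed

context
  fixes P :: "'a spp" and V1 V2 :: "'a set"
  assumes P: "P \<in> SPP V1 V2"
begin

lemma SPP_setpart: "is_setpart (V1 \<union> V2) (fst ` P)"
  using P unfolding SPP_def by blast

lemma SPP_block_nonempty: "(B, p) \<in> P \<Longrightarrow> B \<noteq> {}"
  using SPP_setpart unfolding is_setpart_def by force

lemma SPP_Union: "\<Union>(fst ` P) = V1 \<union> V2"
  using SPP_setpart unfolding is_setpart_def by blast

lemma SPP_block_subset: "(B, p) \<in> P \<Longrightarrow> B \<subseteq> V1 \<union> V2"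
  using SPP_Union by force

lemma SPP_blocks_overlap:
  assumes "(B, p) \<in> P" "(B', p') \<in> P" "B \<inter> B' \<noteq> {}"
  shows "B = B' \<and> p = p'"
proof -
  from assms SPP_setpart have "B = B'" unfolding is_setpart_def by force
  moreover have "inj_on fst P" using P unfolding SPP_def by blast
  ultimately show ?thesis using inj_onD[of fst P "(B, p)" "(B', p')"] assms by simp
qed

lemma SPP_point: "(B, Some e) \<in> P \<Longrightarrow> e \<in> B \<and> e \<in> V1"
  using P unfolding SPP_def by fast

lemma SPP_unpointed: "(B, None) \<in> P \<Longrightarrow> \<not> B \<subseteq> V1"
  using P unfolding SPP_def by fast

lemma SPP_pointed: "(B, Some e) \<in> P \<Longrightarrow> \<not> B \<subseteq> V2"
  using P unfolding SPP_def by fast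

end

lemma sp_le_iff:
  "sp_le P Q \<longleftrightarrow> (\<forall>(b, p) \<in> P. \<exists>Qs \<subseteq> Q. b = \<Union>(fst ` Qs) \<and> (\<exists>q. (q, p) \<in> Qs))"
proof -
  have "(case p of Some e \<Rightarrow> \<exists>q. (q, Some e) \<in> Qs | None \<Rightarrow> \<exists>q. (q, None) \<in> Qs) \<longleftrightarrow>
        (\<exists>q. (q, p) \<in> Qs)" for p :: "'a option" and Qs :: "'a spp"
    by (cases p) simp_all
  then show ?thesis unfolding sp_le_def by simp
qed

lemma sp_leI:
  assumes "\<And>b p. (b, p) \<in> P \<Longrightarrow> \<exists>Qs \<subseteq> Q. b = \<Union>(fst ` Qs) \<and> (\<exists>q. (q, p) \<in> Qs)"
  shows "sp_le P Q"
  unfolding sp_le_iff by (clarify, rule assms)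

lemma sp_leE:
  assumes "sp_le P Q" "(b, p) \<in> P"
  obtains Qs q where "Qs \<subseteq> Q" "b = \<Union>(fst ` Qs)" "(q, p) \<in> Qs"
proof -
  from bspec[OF assms(1)[unfolded sp_le_iff] assms(2)]
  have "\<exists>Qs \<subseteq> Q. b = \<Union>(fst ` Qs) \<and> (\<exists>q. (q, p) \<in> Qs)" by simp
  with that show ?thesis by blast
qed

lemma sp_le_refl: "sp_le P P"
proof (rule sp_leI)
  fix b p assume "(b, p) \<in> P"
  then show "\<exists>Qs \<subseteq> P. b = \<Union>(fst ` Qs) \<and> (\<exists>q. (q, p) \<in> Qs)"
    by (intro exI[of _ "{(b, p)}"]) auto
qed

lemma sp_le_trans:
  assumes PQ: "sp_le P Q" and QR: "sp_le Q R"
  shows "sp_le P R"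
proof (rule sp_leI)
  fix b p assume "(b, p) \<in> P"
  with PQ obtain Qs q where Qs: "Qs \<subseteq> Q" "b = \<Union>(fst ` Qs)" and q: "(q, p) \<in> Qs"
    by (rule sp_leE)
  have "\<exists>Rs. Rs \<subseteq> R \<and> fst x = \<Union>(fst ` Rs) \<and> (\<exists>r. (r, snd x) \<in> Rs)" if "x \<in> Qs" for x
    using that Qs(1) QR by (cases x) (auto elim!: sp_leE)
  then obtain Rs where Rs: "\<And>x. x \<in> Qs \<Longrightarrow> Rs x \<subseteq> R \<and> fst x = \<Union>(fst ` Rs x) \<and> (\<exists>r. (r, snd x) \<in> Rs x)"
    by metis
  have "(\<Union>x\<in>Qs. Rs x) \<subseteq> R" using Rs by blast
  moreover have "b = \<Union>(fst ` (\<Union>x\<in>Qs. Rs x))" using Rs Qs(2) by auto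
  moreover obtain r where "(r, p) \<in> Rs (q, p)" using Rs[OF q] by auto
  with q have "\<exists>r. (r, p) \<in> (\<Union>x\<in>Qs. Rs x)" by blast
  ultimately show "\<exists>Rs \<subseteq> R. b = \<Union>(fst ` Rs) \<and> (\<exists>r. (r, p) \<in> Rs)" by blast
qed

lemma sp_le_UN:
  assumes "\<And>x. x \<in> X \<Longrightarrow> sp_le (Q x) (R x)"
  shows "sp_le (\<Union>x\<in>X. Q x) (\<Union>x\<in>X. R x)"
proof (rule sp_leI)
  fix b p assume "(b, p) \<in> (\<Union>x\<in>X. Q x)"
  then obtain x where "x \<in> X" "(b, p) \<in> Q x" by blast
  with assms obtain Rs r where "Rs \<subseteq> R x" "b = \<Union>(fst ` Rs)" "(r, p) \<in> Rs"
    by (meson sp_leE)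
  with \<open>x \<in> X\<close> show "\<exists>Rs \<subseteq> (\<Union>x\<in>X. R x). b = \<Union>(fst ` Rs) \<and> (\<exists>r. (r, p) \<in> Rs)"
    by blast
qed

lemma le_hat1:
  assumes P: "P \<in> SPP V1 V2" shows "sp_le P (hat1 V1 V2)"
proof (rule sp_leI)
  fix b p assume bp: "(b, p) \<in> P"
  define Qs where "Qs = {q \<in> hat1 V1 V2. fst q \<subseteq> b}"
  have "b \<subseteq> V1 \<union> V2" using SPP_block_subset[OF P bp] .
  have "b = \<Union>(fst ` Qs)"
  proof
    show "b \<subseteq> \<Union>(fst ` Qs)"
    proof
      fix x assume "x \<in> b"
      with \<open>b \<subseteq> V1 \<union> V2\<close> have "({x}, if x \<in> V1 then Some x else None) \<in> Qs"
        unfolding Qs_def hat1_def by auto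
      then show "x \<in> \<Union>(fst ` Qs)" by force
    qed
  qed (auto simp: Qs_def)
  moreover have "\<exists>q. (q, p) \<in> Qs"
  proof (cases p)
    case None
    then obtain x where "x \<in> b" "x \<notin> V1" using SPP_unpointed[OF P] bp by blast
    with \<open>b \<subseteq> V1 \<union> V2\<close> have "({x}, None) \<in> Qs" unfolding Qs_def hat1_def by auto
    with None show ?thesis by blast
  next
    case (Some e)
    with SPP_point[OF P] bp have "({e}, Some e) \<in> Qs" unfolding Qs_def hat1_def by auto
    with Some show ?thesis by blast
  qed
  moreover have "Qs \<subseteq> hat1 V1 V2" unfolding Qs_def by blast
  ultimately show "\<exists>Qs \<subseteq> hat1 V1 V2. b = \<Union>(fst ` Qs) \<and> (\<exists>q. (q, p) \<in> Qs)"
    by blast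
qed

definition spp_restrict :: "'a set \<Rightarrow> 'a spp \<Rightarrow> 'a spp" where
  "spp_restrict b Q = {x \<in> Q. fst x \<subseteq> b}"

lemma spp_restrict_Union_block:
  assumes "sp_le P Q" "(b, p) \<in> P"
  shows "\<Union>(fst ` spp_restrict b Q) = b"
proof -
  from assms obtain Qs q where "Qs \<subseteq> Q" "b = \<Union>(fst ` Qs)" by (rule sp_leE)
  then have "Qs \<subseteq> spp_restrict b Q" unfolding spp_restrict_def by blast
  with \<open>b = \<Union>(fst ` Qs)\<close> show ?thesis unfolding spp_restrict_def by blast
qed

lemma spp_restrict_SPP:
  assumes Q: "Q \<in> SPP V1 V2" and cover: "\<Union>(fst ` spp_restrict b Q) = b"
  shows "spp_restrict b Q \<in> SPP (b \<inter> V1) (b \<inter> V2)"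
proof (rule SPP_I)
  have "b \<subseteq> V1 \<union> V2" using cover SPP_block_subset[OF Q] unfolding spp_restrict_def by fastforce
  with cover show "\<Union>(fst ` spp_restrict b Q) = b \<inter> V1 \<union> b \<inter> V2" by blast
next
  fix B p assume "(B, p) \<in> spp_restrict b Q"
  then have Bp: "(B, p) \<in> Q" "B \<subseteq> b" unfolding spp_restrict_def by auto
  show "B \<noteq> {}" using SPP_block_nonempty[OF Q Bp(1)] .
  show "e \<in> B \<and> e \<in> b \<inter> V1" if "p = Some e" for e
    using SPP_point[OF Q] Bp that by blast
  show "p \<noteq> None" if "B \<subseteq> b \<inter> V1"
    using SPP_unpointed[OF Q] Bp that by (cases p) auto
  show "p = None" if "B \<subseteq> b \<inter> V2"
    using SPP_pointed[OF Q] Bp that by (cases p) blast+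
  show "B = B' \<and> p = p'" if "(B', p') \<in> spp_restrict b Q" "B \<inter> B' \<noteq> {}" for B' p'
    using SPP_blocks_overlap[OF Q Bp(1)] that unfolding spp_restrict_def by blast
qed

lemma spp_restrict_mono:
  assumes "sp_le Q R" shows "sp_le (spp_restrict b Q) (spp_restrict b R)"
proof (rule sp_leI)
  fix c p assume "(c, p) \<in> spp_restrict b Q"
  then have "(c, p) \<in> Q" "c \<subseteq> b" unfolding spp_restrict_def by auto
  with assms obtain Rs r where "Rs \<subseteq> R" "c = \<Union>(fst ` Rs)" "(r, p) \<in> Rs" by (meson sp_leE)
  moreover from this \<open>c \<subseteq> b\<close> have "Rs \<subseteq> spp_restrict b R" unfolding spp_restrict_def by auto
  ultimately show "\<exists>Rs \<subseteq> spp_restrict b R. c = \<Union>(fst ` Rs) \<and> (\<exists>r. (r, p) \<in> Rs)" by blast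
qed

lemma spp_restrict_block:
  assumes P: "P \<in> SPP V1 V2" and bp: "(b, p) \<in> P"
  shows "spp_restrict b P = {(b, p)}"
proof
  show "spp_restrict b P \<subseteq> {(b, p)}"
  proof
    fix x assume "x \<in> spp_restrict b P"
    then obtain B q where x: "x = (B, q)" "(B, q) \<in> P" "B \<subseteq> b"
      unfolding spp_restrict_def by (cases x) auto
    with SPP_block_nonempty[OF P] have "B \<inter> b \<noteq> {}" by blast
    with SPP_blocks_overlap[OF P x(2) bp] x(1) show "x \<in> {(b, p)}" by simp
  qed
qed (use bp in \<open>simp add: spp_restrict_def\<close>)

lemma setpart_inj_overlap:
  assumes "is_setpart V (J ` X)" "inj_on J X" "x \<in> X" "y \<in> X" "J x \<inter> J y \<noteq> {}"
  shows "x = y"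
proof (rule ccontr)
  assume "x \<noteq> y"
  with assms(2-4) have "J x \<noteq> J y" unfolding inj_on_def by blast
  with assms(1,3,4) have "J x \<inter> J y = {}" unfolding is_setpart_def by blast
  with assms(5) show False by blast
qed

lemma SPP_UN:
  assumes sp: "is_setpart (V1 \<union> V2) (J ` X)" and inj: "inj_on J X"
    and Q: "\<And>x. x \<in> X \<Longrightarrow> Q x \<in> SPP (J x \<inter> V1) (J x \<inter> V2)"
  shows "(\<Union>x\<in>X. Q x) \<in> SPP V1 V2"
proof (rule SPP_I)
  have sub: "B \<subseteq> J x" if "x \<in> X" "(B, p) \<in> Q x" for x B p
    using SPP_block_subset[OF Q[OF that(1)] that(2)] by blast
  show "\<Union>(fst ` (\<Union>x\<in>X. Q x)) = V1 \<union> V2"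
  proof -
    have "\<Union>(fst ` (\<Union>x\<in>X. Q x)) = (\<Union>x\<in>X. \<Union>(fst ` Q x))" by blast
    also have "\<dots> = (\<Union>x\<in>X. J x \<inter> (V1 \<union> V2))" using SPP_Union[OF Q] by (simp add: Int_Un_distrib)
    also have "\<dots> = V1 \<union> V2" using sp unfolding is_setpart_def by blast
    finally show ?thesis .
  qed
  fix B p assume "(B, p) \<in> (\<Union>x\<in>X. Q x)"
  then obtain x where x: "x \<in> X" "(B, p) \<in> Q x" by blast
  note Qx = Q[OF x(1)]
  show "B \<noteq> {}" using SPP_block_nonempty[OF Qx x(2)] .
  show "e \<in> B \<and> e \<in> V1" if "p = Some e" for e using SPP_point[OF Qx] x(2) that by blast
  show "p \<noteq> None" if "B \<subseteq> V1"
    using SPP_unpointed[OF Qx] x(2) that sub[OF x] by (cases p) auto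
  show "p = None" if "B \<subseteq> V2"
    using SPP_pointed[OF Qx] x(2) that sub[OF x] by (cases p) auto
  show "B = B' \<and> p = p'" if "(B', p') \<in> (\<Union>x\<in>X. Q x)" "B \<inter> B' \<noteq> {}" for B' p'
  proof -
    from that(1) obtain y where y: "y \<in> X" "(B', p') \<in> Q y" by blast
    with x that(2) sub have "J x \<inter> J y \<noteq> {}" by blast
    with setpart_inj_overlap[OF sp inj x(1) y(1)] have "x = y" .
    with SPP_blocks_overlap[OF Qx x(2)] y(2) that(2) show ?thesis by blast
  qed
qed

lemma spp_restrict_UN:
  assumes sp: "is_setpart V (J ` X)" and inj: "inj_on J X"
    and Q: "\<And>x. x \<in> X \<Longrightarrow> Q x \<in> SPP (J x \<inter> V1) (J x \<inter> V2)" and x: "x \<in> X"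
  shows "spp_restrict (J x) (\<Union>y\<in>X. Q y) = Q x"
proof
  show "Q x \<subseteq> spp_restrict (J x) (\<Union>y\<in>X. Q y)"
    using SPP_block_subset[OF Q[OF x]] unfolding spp_restrict_def by (fastforce intro: x)
  show "spp_restrict (J x) (\<Union>y\<in>X. Q y) \<subseteq> Q x"
  proof
    fix z assume "z \<in> spp_restrict (J x) (\<Union>y\<in>X. Q y)"
    then obtain y B p where z: "z = (B, p)" "y \<in> X" "(B, p) \<in> Q y" "B \<subseteq> J x"
      unfolding spp_restrict_def by (cases z) auto
    with SPP_block_nonempty[OF Q[OF z(2)]] SPP_block_subset[OF Q[OF z(2)]] have "J x \<inter> J y \<noteq> {}"
      by blast
    with setpart_inj_overlap[OF sp inj x z(2)] z show "z \<in> Q x" by simp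
  qed
qed

lemma UN_spp_restrict_blocks:
  assumes le: "sp_le P Q" and P: "P \<in> SPP V1 V2" and Q: "Q \<in> SPP V1 V2"
  shows "(\<Union>b\<in>fst ` P. spp_restrict b Q) = Q"
proof
  show "Q \<subseteq> (\<Union>b\<in>fst ` P. spp_restrict b Q)"
  proof
    fix y assume y: "y \<in> Q"
    obtain B q where yB: "y = (B, q)" by (cases y)
    obtain x where x: "x \<in> B" using SPP_block_nonempty[OF Q] y yB by blast
    then have "x \<in> \<Union>(fst ` P)" using SPP_block_subset[OF Q] SPP_Union[OF P] y yB by blast
    then obtain b p where bp: "(b, p) \<in> P" "x \<in> b" by (auto simp: image_iff)
    then have "x \<in> \<Union>(fst ` spp_restrict b Q)" using spp_restrict_Union_block[OF le] by blast
    then obtain B' q' where B': "(B', q') \<in> spp_restrict b Q" "x \<in> B'" by (auto simp: image_iff)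
    then have "(B', q') \<in> Q" unfolding spp_restrict_def by blast
    with SPP_blocks_overlap[OF Q] y yB x B'(2) have "y = (B', q')" by blast
    with B'(1) bp(1) show "y \<in> (\<Union>b\<in>fst ` P. spp_restrict b Q)" by force
  qed
qed (auto simp: spp_restrict_def)

lemma mpt_SPP: "V1 \<inter> V2 = {} \<Longrightarrow> v \<in> V1 \<Longrightarrow> mpt V1 V2 v \<in> SPP V1 V2"
  by (rule SPP_I) (auto simp: mpt_def)

lemma mcross_SPP: "V1 \<inter> V2 = {} \<Longrightarrow> V2 \<noteq> {} \<Longrightarrow> mcross V1 V2 \<in> SPP V1 V2"
  by (rule SPP_I) (auto simp: mcross_def)

lemma minimals_iff:
  assumes "V1 \<inter> V2 = {}"
  shows "m \<in> minimals V1 V2 \<longleftrightarrow> m \<in> SPP V1 V2 \<and> (\<exists>p. m = {(V1 \<union> V2, p)})"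
proof
  assume "m \<in> minimals V1 V2"
  then consider v where "v \<in> V1" "m = mpt V1 V2 v" | "V2 \<noteq> {}" "m = mcross V1 V2"
    unfolding minimals_def by (cases "V2 = {}") auto
  then show "m \<in> SPP V1 V2 \<and> (\<exists>p. m = {(V1 \<union> V2, p)})"
  proof cases
    case 1
    with mpt_SPP[OF assms 1(1)] show ?thesis unfolding mpt_def by blast
  next
    case 2
    with mcross_SPP[OF assms 2(1)] show ?thesis unfolding mcross_def by blast
  qed
next
  assume "m \<in> SPP V1 V2 \<and> (\<exists>p. m = {(V1 \<union> V2, p)})"
  then obtain p where m: "m \<in> SPP V1 V2" "m = {(V1 \<union> V2, p)}" by blast
  show "m \<in> minimals V1 V2"
  proof (cases p)
    case None
    with m SPP_unpointed[OF m(1)] have "V2 \<noteq> {}" by auto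
    with m None show ?thesis by (simp add: minimals_def mcross_def)
  next
    case (Some v)
    with m SPP_point[OF m(1)] have "v \<in> V1" by auto
    moreover have "m = mpt V1 V2 v" using m Some by (simp add: mpt_def)
    ultimately show ?thesis unfolding minimals_def by (intro UnI1 image_eqI)
  qed
qed

lemma sp_le_mpt_iff:
  assumes "P \<in> SPP V1 V2" shows "sp_le (mpt V1 V2 v) P \<longleftrightarrow> (\<exists>b. (b, Some v) \<in> P)"
proof
  assume le: "sp_le (mpt V1 V2 v) P"
  have "(V1 \<union> V2, Some v) \<in> mpt V1 V2 v" by (simp add: mpt_def)
  with le obtain Qs q where "Qs \<subseteq> P" "V1 \<union> V2 = \<Union>(fst ` Qs)" "(q, Some v) \<in> Qs"
    by (rule sp_leE)
  then show "\<exists>b. (b, Some v) \<in> P" by blast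
next
  assume "\<exists>b. (b, Some v) \<in> P"
  with SPP_Union[OF assms] show "sp_le (mpt V1 V2 v) P"
    unfolding mpt_def by (intro sp_leI) (auto intro!: exI[of _ P])
qed

lemma sp_le_mcross_iff:
  assumes "P \<in> SPP V1 V2" shows "sp_le (mcross V1 V2) P \<longleftrightarrow> (\<exists>b. (b, None) \<in> P)"
proof
  assume le: "sp_le (mcross V1 V2) P"
  have "(V1 \<union> V2, None) \<in> mcross V1 V2" by (simp add: mcross_def)
  with le obtain Qs q where "Qs \<subseteq> P" "V1 \<union> V2 = \<Union>(fst ` Qs)" "(q, None) \<in> Qs"
    by (rule sp_leE)
  then show "\<exists>b. (b, None) \<in> P" by blast
next
  assume "\<exists>b. (b, None) \<in> P"
  with SPP_Union[OF assms] show "sp_le (mcross V1 V2) P"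
    unfolding mcross_def by (intro sp_leI) (auto intro!: exI[of _ P])
qed

lemma fst_relP: "fst ` relP \<sigma> P = (`) \<sigma> ` fst ` P"
  unfolding relP_def by (simp add: image_image case_prod_beta')

lemma relP_singleton: "relP \<sigma> {(b, p)} = {(\<sigma> ` b, map_option \<sigma> p)}"
  unfolding relP_def by simp

lemma relP_mpt: "relP \<sigma> (mpt V1 V2 v) = mpt (\<sigma> ` V1) (\<sigma> ` V2) (\<sigma> v)"
  by (simp add: mpt_def relP_def image_Un)

lemma relP_spp_restrict:
  assumes inj: "inj_on \<sigma> V" and b: "b \<subseteq> V" and Q: "\<forall>x \<in> Q. fst x \<subseteq> V"
  shows "spp_restrict (\<sigma> ` b) (relP \<sigma> Q) = relP \<sigma> (spp_restrict b Q)"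
proof -
  have sub: "\<sigma> ` B \<subseteq> \<sigma> ` b \<longleftrightarrow> B \<subseteq> b" if "B \<subseteq> V" for B
  proof -
    have "\<sigma> ` B \<subseteq> \<sigma> ` b \<longleftrightarrow> \<sigma> ` (B \<inter> b) = \<sigma> ` B"
      using inj_on_image_Int[OF inj that b] by blast
    also have "\<dots> \<longleftrightarrow> B \<inter> b = B" using that by (intro inj_on_image_eq_iff[OF inj]) auto
    finally show ?thesis by blast
  qed
  have "spp_restrict (\<sigma> ` b) (relP \<sigma> Q) =
      (\<lambda>(B, p). (\<sigma> ` B, map_option \<sigma> p)) ` {x \<in> Q. \<sigma> ` fst x \<subseteq> \<sigma> ` b}"
    unfolding spp_restrict_def relP_def by force
  also have "{x \<in> Q. \<sigma> ` fst x \<subseteq> \<sigma> ` b} = spp_restrict b Q"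
    unfolding spp_restrict_def by (rule Collect_cong) (use Q sub in blast)
  finally show ?thesis unfolding relP_def .
qed

lemma map_spp_restrict_relP:
  assumes inj: "inj_on \<sigma> (V1 \<union> V2)" and b: "b \<subseteq> V1 \<union> V2" and cs: "set cs \<subseteq> SPP V1 V2"
  shows "map (spp_restrict (\<sigma> ` b)) (map (relP \<sigma>) cs) = map (relP \<sigma>) (map (spp_restrict b) cs)"
proof -
  have "spp_restrict (\<sigma> ` b) (relP \<sigma> Q) = relP \<sigma> (spp_restrict b Q)" if "Q \<in> set cs" for Q
  proof (rule relP_spp_restrict[OF inj b])
    show "\<forall>x \<in> Q. fst x \<subseteq> V1 \<union> V2"
      using SPP_block_subset[of Q V1 V2] cs that by force
  qed
  then show ?thesis by simp
qed

section \<open>Multichains\<close>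

lemma multichain_inI:
  assumes "length cs = n" "\<And>i. i < n \<Longrightarrow> cs ! i \<in> X"
    and "\<And>i. Suc i < n \<Longrightarrow> sp_le (cs ! i) (cs ! Suc i)"
  shows "multichain_in X n cs"
  unfolding multichain_in_def using assms by (auto simp: in_set_conv_nth)

context
  fixes X n cs
  assumes mc: "multichain_in X n cs"
begin

lemma multichain_in_length: "length cs = n"
  using mc unfolding multichain_in_def by simp

lemma multichain_in_nth: "i < n \<Longrightarrow> cs ! i \<in> X"
  using mc unfolding multichain_in_def by auto

lemma multichain_in_le:
  assumes "i \<le> j" "j < n" shows "sp_le (cs ! i) (cs ! j)"
  using assms
proof (induction j rule: dec_induct)
  case base show ?case by (rule sp_le_refl)
next
  case (step j)
  with mc have "sp_le (cs ! j) (cs ! Suc j)" unfolding multichain_in_def by simp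
  with step show ?case using sp_le_trans by simp
qed

lemma multichain_in_hd:
  assumes "0 < n" shows "hd cs = cs ! 0" "hd cs \<in> X"
  using assms multichain_in_length multichain_in_nth by (auto simp: hd_conv_nth)

end

lemma multichain_in_Cons:
  "multichain_in X (Suc n) (m # c) \<longleftrightarrow>
     m \<in> X \<and> multichain_in X n c \<and> (0 < n \<longrightarrow> sp_le m (hd c))"
proof
  assume mc: "multichain_in X (Suc n) (m # c)"
  then have "m \<in> X" "length c = n" using multichain_in_nth[OF mc, of 0] multichain_in_length[OF mc]
    by auto
  moreover have "multichain_in X n c"
    by (rule multichain_inI) (use mc in \<open>auto simp: multichain_in_def\<close>)
  moreover have "sp_le m (hd c)" if "0 < n"
    using mc that \<open>length c = n\<close> unfolding multichain_in_def by (auto simp: hd_conv_nth)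
  ultimately show "m \<in> X \<and> multichain_in X n c \<and> (0 < n \<longrightarrow> sp_le m (hd c))" by blast
next
  assume "m \<in> X \<and> multichain_in X n c \<and> (0 < n \<longrightarrow> sp_le m (hd c))"
  then show "multichain_in X (Suc n) (m # c)"
    unfolding multichain_in_def by (auto simp: hd_conv_nth nth_Cons split: nat.split)
qed

lemma multichain_in_restrict:
  assumes n: "0 < n" and mc: "multichain_in (SPP V1 V2) n cs" and bp: "(b, p) \<in> hd cs"
  shows "multichain_in (SPP (b \<inter> V1) (b \<inter> V2)) n (map (spp_restrict b) cs)"
    and "hd (map (spp_restrict b) cs) = {(b, p)}"
proof -
  have len: "length cs = n" by (rule multichain_in_length[OF mc])
  show "multichain_in (SPP (b \<inter> V1) (b \<inter> V2)) n (map (spp_restrict b) cs)"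
  proof (rule multichain_inI)
    fix i assume "i < n"
    with mc n have "sp_le (hd cs) (cs ! i)"
      using multichain_in_le[OF mc, of 0 i] multichain_in_hd[OF mc n] by simp
    then have "\<Union>(fst ` spp_restrict b (cs ! i)) = b" using bp by (rule spp_restrict_Union_block)
    with multichain_in_nth[OF mc \<open>i < n\<close>] \<open>i < n\<close> len
    show "map (spp_restrict b) cs ! i \<in> SPP (b \<inter> V1) (b \<inter> V2)"
      by (simp add: spp_restrict_SPP)
  next
    fix i assume "Suc i < n"
    with mc len show "sp_le (map (spp_restrict b) cs ! i) (map (spp_restrict b) cs ! Suc i)"
      unfolding multichain_in_def by (simp add: spp_restrict_mono)
  qed (simp add: len)
  show "hd (map (spp_restrict b) cs) = {(b, p)}"
  proof -
    have "cs \<noteq> []" using len n by auto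
    then show ?thesis using spp_restrict_block[OF multichain_in_hd(2)[OF mc n] bp] by (simp add: hd_map)
  qed
qed

text \<open>By \<open>le_hat1\<close> the upper end of the interval imposes no condition.\<close>

lemma multichain_in_interval_iff:
  assumes m: "m \<in> SPP V1 V2"
  shows "multichain_in (interval V1 V2 m (hat1 V1 V2)) n c \<longleftrightarrow>
         multichain_in (SPP V1 V2) (Suc n) (m # c)"
proof
  assume h: "multichain_in (interval V1 V2 m (hat1 V1 V2)) n c"
  then have "multichain_in (SPP V1 V2) n c"
    unfolding multichain_in_def interval_def by blast
  moreover have "sp_le m (hd c)" if "0 < n"
    using multichain_in_hd(2)[OF h that] unfolding interval_def by blast
  ultimately show "multichain_in (SPP V1 V2) (Suc n) (m # c)"
    using m by (simp add: multichain_in_Cons)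
next
  assume "multichain_in (SPP V1 V2) (Suc n) (m # c)"
  then have mc: "multichain_in (SPP V1 V2) n c" and le: "0 < n \<Longrightarrow> sp_le m (hd c)"
    by (simp_all add: multichain_in_Cons)
  have "c ! i \<in> interval V1 V2 m (hat1 V1 V2)" if i: "i < n" for i
  proof -
    have "sp_le m (c ! i)"
      using le multichain_in_hd(1)[OF mc] multichain_in_le[OF mc, of 0 i] i sp_le_trans by fastforce
    with multichain_in_nth[OF mc i] le_hat1 show ?thesis unfolding interval_def by blast
  qed
  with mc show "multichain_in (interval V1 V2 m (hat1 V1 V2)) n c"
    unfolding multichain_in_def by (auto simp: in_set_conv_nth)
qed

section \<open>Structures of the form \<open>E \<circ> F\<close>\<close>

lemma species_isoI:
  assumes "\<And>V1 V2. admissible V1 V2 \<Longrightarrow> bij_betw (\<phi> V1 V2) (fst F V1 V2) (fst G V1 V2)"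
    and "\<And>V1 V2 W1 W2 \<sigma> s. admissible V1 V2 \<Longrightarrow> admissible W1 W2 \<Longrightarrow>
            bij_betw \<sigma> V1 W1 \<Longrightarrow> bij_betw \<sigma> V2 W2 \<Longrightarrow> s \<in> fst F V1 V2 \<Longrightarrow>
            \<phi> W1 W2 (snd F \<sigma> s) = snd G \<sigma> (\<phi> V1 V2 s)"
  shows "species_iso F G"
  unfolding species_iso_def using assms by blast

lemma bij_betw_admissible:
  assumes "admissible W1 W2" "bij_betw \<sigma> V1 W1" "bij_betw \<sigma> V2 W2"
  shows "inj_on \<sigma> (V1 \<union> V2)" and "\<sigma> ` V1 = W1" and "\<sigma> ` V2 = W2"
proof -
  show im: "\<sigma> ` V1 = W1" "\<sigma> ` V2 = W2" using assms(2,3) by (auto simp: bij_betw_def)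
  have "W1 \<inter> W2 = {}" using assms(1) unfolding admissible_def by auto
  then show "inj_on \<sigma> (V1 \<union> V2)" unfolding inj_on_Un using assms(2,3) im
    by (auto simp: bij_betw_def)
qed

lemma sp_sum_carrier:
  "t \<in> fst (sp_sum F G) V1 V2 \<longleftrightarrow>
     (\<exists>c. t = Inl c \<and> c \<in> fst F V1 V2) \<or> (\<exists>c. t = Inr c \<and> c \<in> fst G V1 V2)"
  unfolding sp_sum_def by auto

lemma sp_prod_carrier:
  "y \<in> fst (sp_prod F G) V1 V2 \<longleftrightarrow> (\<exists>I1 J1 f g. y = ((I1, J1), f, g) \<and>
     I1 \<subseteq> V1 \<and> J1 \<subseteq> V2 \<and> f \<in> fst F I1 J1 \<and> g \<in> fst G (V1 - I1) (V2 - J1))"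
  by (simp add: sp_prod_def)

lemma snd_sp_prod: "snd (sp_prod F G) \<sigma> ((I1, J1), f, g) = ((\<sigma> ` I1, \<sigma> ` J1), snd F \<sigma> f, snd G \<sigma> g)"
  by (simp add: sp_prod_def)

lemma comp_E_carrier_setpart:
  "S \<in> comp_E_carrier F V1 V2 \<Longrightarrow> is_setpart (V1 \<union> V2) (fst ` S)"
  unfolding comp_E_carrier_def by (drule CollectD) (erule conjunct1)

lemma comp_E_carrier_fst_inj:
  "S \<in> comp_E_carrier F V1 V2 \<Longrightarrow> (b, t) \<in> S \<Longrightarrow> (b, t') \<in> S \<Longrightarrow> t = t'"
  unfolding comp_E_carrier_def inj_on_def by force

lemma comp_E_carrier_empty_iff:
  assumes "S \<in> comp_E_carrier F V1 V2" shows "S = {} \<longleftrightarrow> V1 \<union> V2 = {}"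
proof -
  have sp: "is_setpart (V1 \<union> V2) (fst ` S)" by (rule comp_E_carrier_setpart[OF assms])
  then have U: "\<Union>(fst ` S) = V1 \<union> V2" unfolding is_setpart_def by (elim conjE)
  from sp have ne: "\<forall>B \<in> fst ` S. B \<noteq> {}" unfolding is_setpart_def by (elim conjE)
  show ?thesis
  proof
    assume empty: "V1 \<union> V2 = {}"
    show "S = {}"
    proof (rule ccontr)
      assume "S \<noteq> {}"
      then obtain x where x: "x \<in> S" by blast
      then have "fst x \<subseteq> V1 \<union> V2" using U by blast
      moreover have "fst x \<noteq> {}" using ne x by blast
      ultimately show False using empty by blast
    qed
  qed (use U in simp)
qed

lemma sp_comp_E1_carrier:
  "fst (sp_comp_E1 F) V1 V2 = (if V1 \<union> V2 = {} then {} else comp_E_carrier F V1 V2)"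
proof -
  have "fst (sp_comp_E1 F) V1 V2 = {S \<in> comp_E_carrier F V1 V2. S \<noteq> {}}"
    by (simp add: sp_comp_E1_def)
  also have "\<dots> = {S \<in> comp_E_carrier F V1 V2. V1 \<union> V2 \<noteq> {}}"
    by (rule Collect_cong) (use comp_E_carrier_empty_iff in blast)
  finally show ?thesis by simp
qed

lemma is_setpart_Un:
  assumes A: "is_setpart U A" and B: "is_setpart (V - U) B" and "U \<subseteq> V"
  shows "is_setpart V (A \<union> B)" and "A \<inter> B = {}"
proof -
  have UA: "\<Union>A = U" and UB: "\<Union>B = V - U" and ne: "\<forall>X \<in> A \<union> B. X \<noteq> {}"
    using A B unfolding is_setpart_def by auto
  have disj: "X \<inter> Y = {}" if "X \<in> A" "Y \<in> B" for X Y
    using that UA UB by blast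
  show "A \<inter> B = {}"
  proof (rule ccontr)
    assume "A \<inter> B \<noteq> {}"
    then obtain X where X: "X \<in> A" "X \<in> B" by blast
    with disj[of X X] have "X = {}" by simp
    moreover have "X \<noteq> {}" using ne X(1) by blast
    ultimately show False by simp
  qed
  have "\<Union>(A \<union> B) = U \<union> (V - U)" by (simp only: Union_Un_distrib UA UB)
  also have "\<dots> = V" using \<open>U \<subseteq> V\<close> by blast
  finally have "\<Union>(A \<union> B) = V" .
  moreover have "\<forall>X \<in> A \<union> B. \<forall>Y \<in> A \<union> B. X \<noteq> Y \<longrightarrow> X \<inter> Y = {}"
  proof (intro ballI impI)
    fix X Y assume XY: "X \<in> A \<union> B" "Y \<in> A \<union> B" "X \<noteq> Y"
    then consider "X \<in> A" "Y \<in> A" | "X \<in> B" "Y \<in> B" | "X \<in> A" "Y \<in> B" | "X \<in> B" "Y \<in> A"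
      by blast
    then show "X \<inter> Y = {}"
    proof cases
      case 1 with A XY(3) show ?thesis unfolding is_setpart_def by blast
    next
      case 2 with B XY(3) show ?thesis unfolding is_setpart_def by blast
    next
      case 3 then show ?thesis by (rule disj)
    next
      case 4 then show ?thesis using disj[of Y X] by (simp add: Int_commute)
    qed
  qed
  ultimately show "is_setpart V (A \<union> B)" using ne unfolding is_setpart_def by blast
qed

lemma is_setpart_UnD:
  assumes AB: "is_setpart V (A \<union> B)" and disj: "A \<inter> B = {}"
  shows "is_setpart (\<Union>A) A" and "is_setpart (V - \<Union>A) B" and "\<Union>A \<subseteq> V"
proof -
  have ne: "\<forall>X \<in> A \<union> B. X \<noteq> {}" and pw: "\<forall>X \<in> A \<union> B. \<forall>Y \<in> A \<union> B. X \<noteq> Y \<longrightarrow> X \<inter> Y = {}"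
    and U: "\<Union>A \<union> \<Union>B = V"
    using AB unfolding is_setpart_def by simp_all
  show "is_setpart (\<Union>A) A" using ne pw unfolding is_setpart_def by simp
  show "\<Union>A \<subseteq> V" by (subst U[symmetric]) (rule Un_upper1)
  have "\<Union>A \<inter> \<Union>B = {}"
  proof (rule ccontr)
    assume "\<Union>A \<inter> \<Union>B \<noteq> {}"
    then obtain X Y where "X \<in> A" "Y \<in> B" "X \<inter> Y \<noteq> {}" by blast
    moreover from this disj have "X \<noteq> Y" by blast
    ultimately show False using pw by blast
  qed
  with U have "\<Union>B = V - \<Union>A" by blast
  with ne pw show "is_setpart (V - \<Union>A) B" unfolding is_setpart_def by simp
qed

lemma comp_E_blocks_cong:
  assumes "\<And>J. J \<in> fst ` S \<Longrightarrow> J \<inter> W1 = J \<inter> V1 \<and> J \<inter> W2 = J \<inter> V2"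
  shows "(\<forall>(J, s) \<in> S. s \<in> fst F (J \<inter> W1) (J \<inter> W2)) \<longleftrightarrow>
         (\<forall>(J, s) \<in> S. s \<in> fst F (J \<inter> V1) (J \<inter> V2))"
proof (rule ball_cong[OF refl])
  fix x assume "x \<in> S"
  then have "fst x \<inter> W1 = fst x \<inter> V1 \<and> fst x \<inter> W2 = fst x \<inter> V2" using assms by blast
  then show "(case x of (J, s) \<Rightarrow> s \<in> fst F (J \<inter> W1) (J \<inter> W2)) \<longleftrightarrow>
             (case x of (J, s) \<Rightarrow> s \<in> fst F (J \<inter> V1) (J \<inter> V2))"
    by (cases x) simp
qed

lemma comp_E_carrier_restrict_iff:
  assumes "\<And>J. J \<in> fst ` S \<Longrightarrow> J \<subseteq> W"
  shows "S \<in> comp_E_carrier F (W \<inter> V1) (W \<inter> V2) \<longleftrightarrow>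
     is_setpart (W \<inter> (V1 \<union> V2)) (fst ` S) \<and> inj_on fst S \<and>
     (\<forall>(J, s) \<in> S. s \<in> fst F (J \<inter> V1) (J \<inter> V2))"
proof -
  have blocks: "J \<inter> (W \<inter> V1) = J \<inter> V1 \<and> J \<inter> (W \<inter> V2) = J \<inter> V2" if "J \<in> fst ` S" for J
    using assms[OF that] by blast
  have "W \<inter> V1 \<union> W \<inter> V2 = W \<inter> (V1 \<union> V2)" by blast
  then show ?thesis unfolding comp_E_carrier_def mem_Collect_eq
    by (subst comp_E_blocks_cong[where S = S]) (use blocks in auto)
qed

lemma comp_E_carrier_UnD:
  assumes disj: "S \<inter> T = {}" and ST: "S \<union> T \<in> comp_E_carrier F V1 V2"
    and U: "U = \<Union>(fst ` S)"
  shows "S \<in> comp_E_carrier F (U \<inter> V1) (U \<inter> V2)" and "T \<in> comp_E_carrier F (V1 - U) (V2 - U)"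
proof -
  have sp: "is_setpart (V1 \<union> V2) (fst ` S \<union> fst ` T)" and inj: "inj_on fst (S \<union> T)"
    and blocks: "\<forall>(J, s) \<in> S \<union> T. s \<in> fst F (J \<inter> V1) (J \<inter> V2)"
    using ST unfolding comp_E_carrier_def by (simp_all add: image_Un)
  have "fst ` S \<inter> fst ` T = {}"
  proof (rule ccontr)
    assume "fst ` S \<inter> fst ` T \<noteq> {}"
    then obtain x y where "x \<in> S" "y \<in> T" "fst x = fst y" by blast
    with inj have "x = y" by (auto dest: inj_onD)
    with \<open>x \<in> S\<close> \<open>y \<in> T\<close> disj show False by blast
  qed
  note parts = is_setpart_UnD[OF sp this, folded U]
  have "U \<inter> (V1 \<union> V2) = U" using parts(3) by blast
  moreover have "J \<subseteq> U" if "J \<in> fst ` S" for J using that U by blast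
  ultimately show "S \<in> comp_E_carrier F (U \<inter> V1) (U \<inter> V2)"
    using parts(1) inj blocks by (subst comp_E_carrier_restrict_iff) (auto intro: inj_on_subset)
  have "J \<subseteq> - U" if "J \<in> fst ` T" for J using parts(2) that unfolding is_setpart_def by blast
  moreover have "- U \<inter> (V1 \<union> V2) = (V1 \<union> V2) - U" "V1 - U = - U \<inter> V1" "V2 - U = - U \<inter> V2" by blast+
  ultimately show "T \<in> comp_E_carrier F (V1 - U) (V2 - U)"
    using parts(2) inj blocks by (simp only:, subst comp_E_carrier_restrict_iff) (auto intro: inj_on_subset)
qed

lemma comp_E_carrier_UnI:
  assumes S: "S \<in> comp_E_carrier F (U \<inter> V1) (U \<inter> V2)" and T: "T \<in> comp_E_carrier F (V1 - U) (V2 - U)"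
    and U: "U = \<Union>(fst ` S)"
  shows "S \<union> T \<in> comp_E_carrier F V1 V2"
proof -
  have "J \<subseteq> U" if "J \<in> fst ` S" for J using that U by blast
  with S have spS: "is_setpart (U \<inter> (V1 \<union> V2)) (fst ` S)" and injS: "inj_on fst S"
    and blocksS: "\<forall>(J, s) \<in> S. s \<in> fst F (J \<inter> V1) (J \<inter> V2)"
    by (simp_all add: comp_E_carrier_restrict_iff)
  have VU: "V1 - U = - U \<inter> V1" "V2 - U = - U \<inter> V2" "- U \<inter> (V1 \<union> V2) = (V1 \<union> V2) - U" by blast+
  have "J \<subseteq> - U" if "J \<in> fst ` T" for J
    using comp_E_carrier_setpart[OF T] that unfolding is_setpart_def by blast
  with T have spT: "is_setpart ((V1 \<union> V2) - U) (fst ` T)" and injT: "inj_on fst T"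
    and blocksT: "\<forall>(J, t) \<in> T. t \<in> fst F (J \<inter> V1) (J \<inter> V2)"
    unfolding VU(1,2) by (simp_all add: comp_E_carrier_restrict_iff VU(3))
  have "U \<inter> (V1 \<union> V2) = U" using spS U unfolding is_setpart_def by blast
  with spS have "is_setpart U (fst ` S)" "U \<subseteq> V1 \<union> V2" by auto
  note joined = is_setpart_Un[OF this(1) spT this(2)]
  have "inj_on fst (S \<union> T)" unfolding inj_on_Un using injS injT joined(2) by blast
  with joined(1) blocksS blocksT show ?thesis unfolding comp_E_carrier_def by (auto simp: image_Un)
qed

lemma comp_E_carrier_Un_iff:
  assumes "S \<inter> T = {}"
  shows "S \<union> T \<in> comp_E_carrier F V1 V2 \<longleftrightarrow>
     (let U = \<Union>(fst ` S) in
        S \<in> comp_E_carrier F (U \<inter> V1) (U \<inter> V2) \<and> T \<in> comp_E_carrier F (V1 - U) (V2 - U))"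
  using comp_E_carrier_UnD[OF assms] comp_E_carrier_UnI by (metis (no_types))

lemma comp_E_carrier_singleton_iff:
  "{(b, s)} \<in> comp_E_carrier F V1 V2 \<longleftrightarrow> b \<noteq> {} \<and> b = V1 \<union> V2 \<and> s \<in> fst F V1 V2"
proof -
  have "b = V1 \<union> V2 \<Longrightarrow> b \<inter> V1 = V1 \<and> b \<inter> V2 = V2" by blast
  then show ?thesis unfolding comp_E_carrier_def is_setpart_def by auto
qed

lemma comp_E_carrier_insert_iff:
  assumes "b \<notin> fst ` S"
  shows "insert (b, s) S \<in> comp_E_carrier F V1 V2 \<longleftrightarrow>
     b \<noteq> {} \<and> b \<subseteq> V1 \<union> V2 \<and> s \<in> fst F (b \<inter> V1) (b \<inter> V2) \<and>
     S \<in> comp_E_carrier F (V1 - b) (V2 - b)"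
proof -
  have "{(b, s)} \<inter> S = {}" using assms by force
  from comp_E_carrier_Un_iff[OF this, of F V1 V2]
  have "insert (b, s) S \<in> comp_E_carrier F V1 V2 \<longleftrightarrow>
      {(b, s)} \<in> comp_E_carrier F (b \<inter> V1) (b \<inter> V2) \<and> S \<in> comp_E_carrier F (V1 - b) (V2 - b)"
    by simp
  moreover have "b = b \<inter> V1 \<union> b \<inter> V2 \<longleftrightarrow> b \<subseteq> V1 \<union> V2" by blast
  ultimately show ?thesis unfolding comp_E_carrier_singleton_iff by blast
qed

lemma insert_block_remove:
  assumes "inj_on fst D" "(b, t) \<in> D"
  shows "insert (b, t) {x \<in> D. fst x \<noteq> b} = D"
  using assms unfolding inj_on_def by force

definition inl_tag :: "('b \<times> 's) set \<Rightarrow> ('b \<times> ('s + 't)) set" where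
  "inl_tag S = apsnd Inl ` S"

definition inr_tag :: "('b \<times> 't) set \<Rightarrow> ('b \<times> ('s + 't)) set" where
  "inr_tag S = apsnd Inr ` S"

definition inl_part :: "('b \<times> ('s + 't)) set \<Rightarrow> ('b \<times> 's) set" where
  "inl_part D = {(J, c). (J, Inl c) \<in> D}"

definition inr_part :: "('b \<times> ('s + 't)) set \<Rightarrow> ('b \<times> 't) set" where
  "inr_part D = {(J, c). (J, Inr c) \<in> D}"

lemma inr_tag_Un_inl_tag_parts: "inr_tag (inr_part D) \<union> inl_tag (inl_part D) = D"
proof (rule set_eqI)
  fix x show "x \<in> inr_tag (inr_part D) \<union> inl_tag (inl_part D) \<longleftrightarrow> x \<in> D"
  proof (cases x)
    case (Pair J t)
    then show ?thesis
      by (cases t) (auto simp: inr_tag_def inl_tag_def inr_part_def inl_part_def image_iff)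
  qed
qed

lemma parts_Un_tags [simp]:
  "inr_part (inr_tag A \<union> inl_tag B) = A" "inl_part (inr_tag A \<union> inl_tag B) = B"
  unfolding inr_part_def inl_part_def inr_tag_def inl_tag_def by force+

lemma fst_tag [simp]: "fst ` inl_tag S = fst ` S" "fst ` inr_tag S = fst ` S"
  unfolding inl_tag_def inr_tag_def by (simp_all add: image_image)

lemma comp_E_carrier_inl_tag:
  fixes F :: "('a, 's) species" and G :: "('a, 't) species"
  shows "inl_tag S \<in> comp_E_carrier (sp_sum F G) V1 V2 \<longleftrightarrow> S \<in> comp_E_carrier F V1 V2"
proof -
  have "inj_on fst (apsnd (Inl :: 's \<Rightarrow> 's + 't) ` S) \<longleftrightarrow> inj_on fst S"
    by (simp add: inj_on_def prod_eq_iff)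
  moreover have "(\<forall>(J, t) \<in> apsnd Inl ` S. t \<in> fst (sp_sum F G) (J \<inter> V1) (J \<inter> V2)) \<longleftrightarrow>
                 (\<forall>(J, c) \<in> S. c \<in> fst F (J \<inter> V1) (J \<inter> V2))"
    by (auto simp: sp_sum_carrier)
  ultimately show ?thesis unfolding comp_E_carrier_def inl_tag_def
    by (simp only: mem_Collect_eq fst_tag[unfolded inl_tag_def])
qed

lemma comp_E_carrier_inr_tag:
  fixes F :: "('a, 's) species" and G :: "('a, 't) species"
  shows "inr_tag S \<in> comp_E_carrier (sp_sum F G) V1 V2 \<longleftrightarrow> S \<in> comp_E_carrier G V1 V2"
proof -
  have "inj_on fst (apsnd (Inr :: 't \<Rightarrow> 's + 't) ` S) \<longleftrightarrow> inj_on fst S"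
    by (simp add: inj_on_def prod_eq_iff)
  moreover have "(\<forall>(J, t) \<in> apsnd Inr ` S. t \<in> fst (sp_sum F G) (J \<inter> V1) (J \<inter> V2)) \<longleftrightarrow>
                 (\<forall>(J, c) \<in> S. c \<in> fst G (J \<inter> V1) (J \<inter> V2))"
    by (auto simp: sp_sum_carrier)
  ultimately show ?thesis unfolding comp_E_carrier_def inr_tag_def
    by (simp only: mem_Collect_eq fst_tag[unfolded inr_tag_def])
qed

text \<open>The exponential law \<open>E \<circ> (F + G) = (E \<circ> G) \<cdot> (E \<circ> F)\<close> on carriers.\<close>

lemma comp_E_carrier_sum_iff:
  "inr_tag A \<union> inl_tag B \<in> comp_E_carrier (sp_sum F G) V1 V2 \<longleftrightarrow>
     (let U = \<Union>(fst ` A) in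
        A \<in> comp_E_carrier G (U \<inter> V1) (U \<inter> V2) \<and> B \<in> comp_E_carrier F (V1 - U) (V2 - U))"
proof -
  have "inr_tag A \<inter> inl_tag B = {}" unfolding inr_tag_def inl_tag_def by auto
  from comp_E_carrier_Un_iff[OF this] show ?thesis
    by (simp add: comp_E_carrier_inl_tag comp_E_carrier_inr_tag)
qed

lemma comp_E_transport_tags:
  "comp_E_transport (sp_sum F G) \<sigma> (inr_tag A \<union> inl_tag B) =
     inr_tag (comp_E_transport G \<sigma> A) \<union> inl_tag (comp_E_transport F \<sigma> B)"
  unfolding comp_E_transport_def inr_tag_def inl_tag_def sp_sum_def
  by (simp add: image_Un image_image case_prod_beta)

lemma fst_comp_E_transport: "fst ` comp_E_transport F \<sigma> S = (`) \<sigma> ` fst ` S"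
  unfolding comp_E_transport_def by (simp add: image_image case_prod_beta')

lemma comp_E_transport_filter:
  fixes F :: "('a, 's) species"
  assumes inj: "inj_on \<sigma> V" and b: "b \<subseteq> V" and D: "\<forall>x \<in> D. fst x \<subseteq> V"
  shows "{x \<in> comp_E_transport F \<sigma> D. fst x \<noteq> \<sigma> ` b} = comp_E_transport F \<sigma> {x \<in> D. fst x \<noteq> b}"
proof -
  have "\<sigma> ` fst x \<noteq> \<sigma> ` b \<longleftrightarrow> fst x \<noteq> b" if "x \<in> D" for x
    using inj_on_image_eq_iff[OF inj _ b] D that by blast
  moreover have "fst ((\<lambda>(J, s). (\<sigma> ` J, snd F \<sigma> s)) x) = \<sigma> ` fst x" for x :: "'a set \<times> 's"
    by (simp add: case_prod_beta)
  ultimately have "{x \<in> D. fst ((\<lambda>(J, s). (\<sigma> ` J, snd F \<sigma> s)) x) \<noteq> \<sigma> ` b} = {x \<in> D. fst x \<noteq> b}"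
    by auto
  moreover have "{y \<in> f ` D. fst y \<noteq> \<sigma> ` b} = f ` {x \<in> D. fst (f x) \<noteq> \<sigma> ` b}" for f :: "_ \<Rightarrow> 'a set \<times> 's"
    by blast
  ultimately show ?thesis unfolding comp_E_transport_def by presburger
qed

section \<open>Decomposing a multichain along the blocks of its first element\<close>

abbreviation Cmin :: "nat \<Rightarrow> ('a, 'a spp list + 'a spp list) species" where
  "Cmin n \<equiv> sp_sum (Cbul n) (Ctimes n)"

definition untag :: "'s + 's \<Rightarrow> 's" where
  "untag t = (case t of Inl x \<Rightarrow> x | Inr x \<Rightarrow> x)"

definition block_tag :: "'a set \<Rightarrow> 'a spp list \<Rightarrow> 'a spp list + 'a spp list" where
  "block_tag b c = (if (b, None) \<in> hd c then Inr c else Inl c)"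

lemma untag_simps [simp]: "untag (Inl x) = x" "untag (Inr x) = x"
  by (simp_all add: untag_def)

lemma untag_block_tag [simp]: "untag (block_tag b c) = c"
  by (simp add: block_tag_def)

lemma Cbul_carrier:
  "cs \<in> fst (Cbul n) V1 V2 \<longleftrightarrow>
     multichain_in (SPP V1 V2) n cs \<and> cs \<noteq> [] \<and> (\<exists>v \<in> V1. hd cs = mpt V1 V2 v)"
  by (simp add: Cbul_def)

lemma Ctimes_carrier:
  "cs \<in> fst (Ctimes n) V1 V2 \<longleftrightarrow> multichain_in (SPP V1 V2) n cs \<and> cs \<noteq> [] \<and> hd cs = mcross V1 V2"
  by (simp add: Ctimes_def)

lemma snd_Cbul: "snd (Cbul n) \<sigma> = map (relP \<sigma>)"
  by (simp add: Cbul_def)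

lemma snd_Ctimes: "snd (Ctimes n) \<sigma> = map (relP \<sigma>)"
  by (simp add: Ctimes_def)

lemma snd_Cmin: "snd (Cmin n) \<sigma> = map_sum (map (relP \<sigma>)) (map (relP \<sigma>))"
  by (simp add: sp_sum_def Cbul_def Ctimes_def)

text \<open>\<open>Cmin n\<close> consists of the multichains whose first element has a single block; the tag
  records whether that block is pointed (\<open>Inl\<close>) or not (\<open>Inr\<close>).\<close>

lemma Cmin_carrier_iff:
  "t \<in> fst (Cmin n) V1 V2 \<longleftrightarrow>
     multichain_in (SPP V1 V2) n (untag t) \<and> untag t \<noteq> [] \<and>
     (\<exists>p. hd (untag t) = {(V1 \<union> V2, p)}) \<and> block_tag (V1 \<union> V2) (untag t) = t"
proof
  assume "t \<in> fst (Cmin n) V1 V2"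
  then consider (bul) c v where "t = Inl c" "multichain_in (SPP V1 V2) n c" "c \<noteq> []"
      "hd c = {(V1 \<union> V2, Some v)}"
    | (times) c where "t = Inr c" "multichain_in (SPP V1 V2) n c" "c \<noteq> []"
      "hd c = {(V1 \<union> V2, None)}"
    unfolding sp_sum_carrier Cbul_carrier Ctimes_carrier mpt_def mcross_def by blast
  then show "multichain_in (SPP V1 V2) n (untag t) \<and> untag t \<noteq> [] \<and>
     (\<exists>p. hd (untag t) = {(V1 \<union> V2, p)}) \<and> block_tag (V1 \<union> V2) (untag t) = t"
    by cases (simp_all add: block_tag_def)
next
  assume rhs: "multichain_in (SPP V1 V2) n (untag t) \<and> untag t \<noteq> [] \<and>
     (\<exists>p. hd (untag t) = {(V1 \<union> V2, p)}) \<and> block_tag (V1 \<union> V2) (untag t) = t"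
  then obtain p where mc: "multichain_in (SPP V1 V2) n (untag t)" and ne: "untag t \<noteq> []"
    and hd: "hd (untag t) = {(V1 \<union> V2, p)}" and tag: "block_tag (V1 \<union> V2) (untag t) = t"
    by blast
  have n: "0 < n" using ne multichain_in_length[OF mc] by auto
  show "t \<in> fst (Cmin n) V1 V2"
  proof (cases p)
    case None
    with tag hd have "t = Inr (untag t)" by (simp add: block_tag_def)
    with mc ne hd None show ?thesis
      unfolding sp_sum_carrier Ctimes_carrier mcross_def by metis
  next
    case (Some v)
    with tag hd have "t = Inl (untag t)" by (simp add: block_tag_def)
    moreover have "v \<in> V1"
      using SPP_point[OF multichain_in_hd(2)[OF mc n]] hd Some by simp
    ultimately show ?thesis
      using mc ne hd Some unfolding sp_sum_carrier Cbul_carrier mpt_def by metis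
  qed
qed

lemma Cmin_carrier_blockD:
  assumes "S \<in> comp_E_carrier (Cmin n) V1 V2" "(J, t) \<in> S"
  shows "multichain_in (SPP (J \<inter> V1) (J \<inter> V2)) n (untag t)" "untag t \<noteq> []"
    "\<exists>p. hd (untag t) = {(J, p)}" "block_tag J (untag t) = t"
proof -
  have "J \<subseteq> \<Union>(fst ` S)" using assms(2) by force
  moreover have "\<Union>(fst ` S) = V1 \<union> V2"
    using assms(1) unfolding comp_E_carrier_def is_setpart_def by blast
  ultimately have J: "J \<inter> V1 \<union> J \<inter> V2 = J" by blast
  from assms have "t \<in> fst (Cmin n) (J \<inter> V1) (J \<inter> V2)" unfolding comp_E_carrier_def by auto
  then show "multichain_in (SPP (J \<inter> V1) (J \<inter> V2)) n (untag t)" "untag t \<noteq> []"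
    "\<exists>p. hd (untag t) = {(J, p)}" "block_tag J (untag t) = t"
    unfolding Cmin_carrier_iff J by blast+
qed

lemma block_tag_relP:
  assumes "c \<noteq> []" "hd c = {(b, p)}"
  shows "block_tag (\<sigma> ` b) (map (relP \<sigma>) c) = map_sum (map (relP \<sigma>)) (map (relP \<sigma>)) (block_tag b c)"
  using assms by (cases p) (simp_all add: block_tag_def hd_map relP_singleton)

definition chain_decomp :: "'a spp list \<Rightarrow> ('a set \<times> ('a spp list + 'a spp list)) set" where
  "chain_decomp cs = (\<lambda>b. (b, block_tag b (map (spp_restrict b) cs))) ` fst ` hd cs"

definition chain_glue :: "nat \<Rightarrow> ('a set \<times> ('a spp list + 'a spp list)) set \<Rightarrow> 'a spp list" where
  "chain_glue n S = map (\<lambda>i. \<Union>x\<in>S. untag (snd x) ! i) [0..<n]"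

lemma fst_chain_decomp: "fst ` chain_decomp cs = fst ` hd cs"
  unfolding chain_decomp_def by (simp add: image_image)

lemma chain_decomp_mem:
  "(b, t) \<in> chain_decomp cs \<longleftrightarrow> b \<in> fst ` hd cs \<and> t = block_tag b (map (spp_restrict b) cs)"
  unfolding chain_decomp_def by auto

lemma chain_decomp_carrier:
  assumes n: "0 < n" and mc: "multichain_in (SPP V1 V2) n cs"
  shows "chain_decomp cs \<in> comp_E_carrier (Cmin n) V1 V2"
  unfolding comp_E_carrier_def
proof (intro CollectI conjI)
  have P0: "hd cs \<in> SPP V1 V2" using multichain_in_hd(2)[OF mc n] .
  show "is_setpart (V1 \<union> V2) (fst ` chain_decomp cs)"
    using SPP_setpart[OF P0] by (simp add: fst_chain_decomp)
  show "inj_on fst (chain_decomp cs)" unfolding chain_decomp_def inj_on_def by auto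
  show "\<forall>(J, t) \<in> chain_decomp cs. t \<in> fst (Cmin n) (J \<inter> V1) (J \<inter> V2)"
  proof clarify
    fix b t assume "(b, t) \<in> chain_decomp cs"
    then obtain p where bp: "(b, p) \<in> hd cs" and t: "t = block_tag b (map (spp_restrict b) cs)"
      unfolding chain_decomp_mem by force
    have b: "b \<inter> V1 \<union> b \<inter> V2 = b" using SPP_block_subset[OF P0 bp] by blast
    have "map (spp_restrict b) cs \<noteq> []" using multichain_in_length[OF mc] n by auto
    with multichain_in_restrict[OF n mc bp] show "t \<in> fst (Cmin n) (b \<inter> V1) (b \<inter> V2)"
      unfolding Cmin_carrier_iff b t untag_block_tag by blast
  qed
qed

lemma chain_glue_decomp:
  assumes n: "0 < n" and mc: "multichain_in (SPP V1 V2) n cs"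
  shows "chain_glue n (chain_decomp cs) = cs"
proof (rule nth_equalityI)
  have len: "length cs = n" by (rule multichain_in_length[OF mc])
  then show "length (chain_glue n (chain_decomp cs)) = length cs" by (simp add: chain_glue_def)
  fix i assume "i < length (chain_glue n (chain_decomp cs))"
  then have i: "i < n" by (simp add: chain_glue_def)
  have "chain_glue n (chain_decomp cs) ! i = (\<Union>b\<in>fst ` hd cs. spp_restrict b (cs ! i))"
    using i len by (simp add: chain_glue_def chain_decomp_def image_image)
  also have "\<dots> = cs ! i"
    using multichain_in_le[OF mc, of 0 i] i multichain_in_hd[OF mc n] multichain_in_nth[OF mc i]
    by (intro UN_spp_restrict_blocks) simp_all
  finally show "chain_glue n (chain_decomp cs) ! i = cs ! i" .
qed

context
  fixes n :: nat and S :: "('a set \<times> ('a spp list + 'a spp list)) set" and V1 V2 :: "'a set"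
  assumes n: "0 < n" and S: "S \<in> comp_E_carrier (Cmin n) V1 V2"
begin

private lemma S_setpart: "is_setpart (V1 \<union> V2) (fst ` S)" and S_inj: "inj_on fst S"
  using S unfolding comp_E_carrier_def by auto

private lemma S_block:
  assumes "x \<in> S"
  shows "multichain_in (SPP (fst x \<inter> V1) (fst x \<inter> V2)) n (untag (snd x))"
    and "\<exists>p. hd (untag (snd x)) = {(fst x, p)}"
    and "block_tag (fst x) (untag (snd x)) = snd x"
  using Cmin_carrier_blockD[OF S, of "fst x" "snd x"] assms by simp_all

private lemma S_entry: "x \<in> S \<Longrightarrow> i < n \<Longrightarrow> untag (snd x) ! i \<in> SPP (fst x \<inter> V1) (fst x \<inter> V2)"
  using multichain_in_nth[OF S_block(1)] .

lemma chain_glue_nth: "i < n \<Longrightarrow> chain_glue n S ! i = (\<Union>x\<in>S. untag (snd x) ! i)"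
  by (simp add: chain_glue_def)

lemma chain_glue_multichain: "multichain_in (SPP V1 V2) n (chain_glue n S)"
proof (rule multichain_inI)
  fix i assume i: "i < n"
  show "chain_glue n S ! i \<in> SPP V1 V2"
    unfolding chain_glue_nth[OF i] by (rule SPP_UN[OF S_setpart S_inj S_entry[OF _ i]])
next
  fix i assume "Suc i < n"
  then have "sp_le (untag (snd x) ! i) (untag (snd x) ! Suc i)" if "x \<in> S" for x
    using S_block(1)[OF that] unfolding multichain_in_def by simp
  with \<open>Suc i < n\<close> show "sp_le (chain_glue n S ! i) (chain_glue n S ! Suc i)"
    by (simp add: chain_glue_nth sp_le_UN)
qed (simp add: chain_glue_def)

lemma hd_chain_glue: "hd (chain_glue n S) = (\<Union>x\<in>S. hd (untag (snd x)))"
proof -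
  have "hd (untag (snd x)) = untag (snd x) ! 0" if "x \<in> S" for x
    using multichain_in_hd(1)[OF S_block(1)[OF that] n] .
  then show ?thesis using n by (simp add: chain_glue_def hd_map)
qed

lemma chain_decomp_glue: "chain_decomp (chain_glue n S) = S"
proof -
  have restrict: "map (spp_restrict (fst x)) (chain_glue n S) = untag (snd x)" if x: "x \<in> S" for x
  proof (rule nth_equalityI)
    show "length (map (spp_restrict (fst x)) (chain_glue n S)) = length (untag (snd x))"
      using multichain_in_length[OF S_block(1)[OF x]] by (simp add: chain_glue_def)
    fix i assume "i < length (map (spp_restrict (fst x)) (chain_glue n S))"
    then have i: "i < n" by (simp add: chain_glue_def)
    show "map (spp_restrict (fst x)) (chain_glue n S) ! i = untag (snd x) ! i"
      using spp_restrict_UN[OF S_setpart S_inj S_entry[OF _ i] x] i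
      by (simp add: chain_glue_nth chain_glue_def)
  qed
  have hd_block: "fst ` hd (untag (snd x)) = {fst x}" if x: "x \<in> S" for x
  proof -
    obtain p where "hd (untag (snd x)) = {(fst x, p)}" using S_block(2)[OF x] by blast
    then show ?thesis by simp
  qed
  have "fst ` hd (chain_glue n S) = (\<Union>x\<in>S. fst ` hd (untag (snd x)))"
    unfolding hd_chain_glue by (rule image_UN)
  also have "\<dots> = fst ` S" using hd_block by (simp add: UNION_singleton_eq_range)
  finally have "chain_decomp (chain_glue n S) =
      (\<lambda>x. (fst x, block_tag (fst x) (map (spp_restrict (fst x)) (chain_glue n S)))) ` S"
    unfolding chain_decomp_def by (simp add: image_image)
  also have "\<dots> = S" using restrict S_block(3) by (simp cong: image_cong)
  finally show ?thesis .
qed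

end

lemma bij_betw_chain_decomp:
  assumes "0 < n"
  shows "bij_betw chain_decomp {cs. multichain_in (SPP V1 V2) n cs} (comp_E_carrier (Cmin n) V1 V2)"
  by (rule bij_betw_byWitness[where f' = "chain_glue n"])
     (use assms in \<open>auto simp: chain_glue_decomp chain_decomp_glue chain_decomp_carrier
                                chain_glue_multichain\<close>)

lemma chain_decomp_relP:
  assumes inj: "inj_on \<sigma> (V1 \<union> V2)" and n: "0 < n" and mc: "multichain_in (SPP V1 V2) n cs"
  shows "chain_decomp (map (relP \<sigma>) cs) = comp_E_transport (Cmin n) \<sigma> (chain_decomp cs)"
proof -
  have ne: "cs \<noteq> []" using multichain_in_length[OF mc] n by auto
  have P0: "hd cs \<in> SPP V1 V2" by (rule multichain_in_hd(2)[OF mc n])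
  have set: "set cs \<subseteq> SPP V1 V2" using mc unfolding multichain_in_def by blast
  have "chain_decomp (map (relP \<sigma>) cs) =
     (\<lambda>b. (\<sigma> ` b, block_tag (\<sigma> ` b) (map (spp_restrict (\<sigma> ` b)) (map (relP \<sigma>) cs)))) ` fst ` hd cs"
    unfolding chain_decomp_def using ne by (simp add: hd_map fst_relP image_image)
  also have "\<dots> = (\<lambda>b. (\<sigma> ` b, map_sum (map (relP \<sigma>)) (map (relP \<sigma>))
                          (block_tag b (map (spp_restrict b) cs)))) ` fst ` hd cs"
  proof (rule image_cong[OF refl])
    fix b assume "b \<in> fst ` hd cs"
    then obtain p where bp: "(b, p) \<in> hd cs" by force
    have "map (spp_restrict b) cs \<noteq> []" using ne by simp
    note tag = block_tag_relP[OF this multichain_in_restrict(2)[OF n mc bp]]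
    show "(\<sigma> ` b, block_tag (\<sigma> ` b) (map (spp_restrict (\<sigma> ` b)) (map (relP \<sigma>) cs))) =
          (\<sigma> ` b, map_sum (map (relP \<sigma>)) (map (relP \<sigma>)) (block_tag b (map (spp_restrict b) cs)))"
      unfolding map_spp_restrict_relP[OF inj SPP_block_subset[OF P0 bp] set] tag ..
  qed
  also have "\<dots> = comp_E_transport (Cmin n) \<sigma> (chain_decomp cs)"
    unfolding comp_E_transport_def chain_decomp_def snd_Cmin by (simp add: image_image)
  finally show ?thesis .
qed

theorem species_iso_Ck:
  assumes "0 < k"
  shows "species_iso (Ck k :: ('a, 'a spp list) species) (sp_comp_E1 (Cmin k))"
proof (rule species_isoI[where \<phi> = "\<lambda>V1 V2. chain_decomp"])
  fix V1 V2 :: "'a set"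
  show "bij_betw chain_decomp (fst (Ck k) V1 V2) (fst (sp_comp_E1 (Cmin k)) V1 V2)"
    using bij_betw_chain_decomp[OF assms, of V1 V2]
    by (simp add: Ck_def sp_comp_E1_carrier bij_betw_def)
next
  fix V1 V2 W1 W2 :: "'a set" and \<sigma> s
  assume adm: "admissible W1 W2" "bij_betw \<sigma> V1 W1" "bij_betw \<sigma> V2 W2"
    and s: "s \<in> fst (Ck k) V1 V2"
  have "inj_on \<sigma> (V1 \<union> V2)" by (rule bij_betw_admissible(1)[OF adm])
  moreover have "multichain_in (SPP V1 V2) k s" using s by (simp add: Ck_def split: if_splits)
  ultimately show "chain_decomp (snd (Ck k) \<sigma> s) = snd (sp_comp_E1 (Cmin k)) \<sigma> (chain_decomp s)"
    using chain_decomp_relP[OF _ assms] by (simp add: Ck_def sp_comp_E1_def)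
qed

definition cell_chain :: "'a set \<Rightarrow> 'a set \<Rightarrow> 'a spp \<times> 'a spp list \<Rightarrow> 'a spp list + 'a spp list" where
  "cell_chain V1 V2 = (\<lambda>(m, c). block_tag (V1 \<union> V2) (m # c))"

lemma bij_betw_cell_chain:
  assumes disj: "V1 \<inter> V2 = {}"
  shows "bij_betw (cell_chain V1 V2) (fst (Cell n) V1 V2) (fst (Cmin (Suc n)) V1 V2)"
proof (rule bij_betw_byWitness[where f' = "\<lambda>t. (hd (untag t), tl (untag t))"])
  show "\<forall>x \<in> fst (Cell n) V1 V2. (hd (untag (cell_chain V1 V2 x)), tl (untag (cell_chain V1 V2 x))) = x"
    by (auto simp: cell_chain_def)
  show "\<forall>t \<in> fst (Cmin (Suc n)) V1 V2. cell_chain V1 V2 (hd (untag t), tl (untag t)) = t"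
  proof
    fix t assume "t \<in> fst (Cmin (Suc n)) V1 V2"
    then have "untag t \<noteq> []" "block_tag (V1 \<union> V2) (untag t) = t"
      unfolding Cmin_carrier_iff by blast+
    then show "cell_chain V1 V2 (hd (untag t), tl (untag t)) = t" by (simp add: cell_chain_def)
  qed
  show "cell_chain V1 V2 ` fst (Cell n) V1 V2 \<subseteq> fst (Cmin (Suc n)) V1 V2"
  proof clarify
    fix m c assume "(m, c) \<in> fst (Cell n) V1 V2"
    then have "m \<in> minimals V1 V2" "multichain_in (interval V1 V2 m (hat1 V1 V2)) n c"
      by (auto simp: Cell_def)
    then show "cell_chain V1 V2 (m, c) \<in> fst (Cmin (Suc n)) V1 V2"
      unfolding minimals_iff[OF disj] Cmin_carrier_iff
      by (auto simp: cell_chain_def multichain_in_interval_iff)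
  qed
  show "(\<lambda>t. (hd (untag t), tl (untag t))) ` fst (Cmin (Suc n)) V1 V2 \<subseteq> fst (Cell n) V1 V2"
  proof clarify
    fix t assume "t \<in> fst (Cmin (Suc n)) V1 V2"
    then obtain m c p where t: "untag t = m # c" "multichain_in (SPP V1 V2) (Suc n) (m # c)"
      "m = {(V1 \<union> V2, p)}"
      unfolding Cmin_carrier_iff by (metis list.collapse)
    then have "m \<in> minimals V1 V2" "multichain_in (interval V1 V2 m (hat1 V1 V2)) n c"
      unfolding minimals_iff[OF disj] by (simp_all add: multichain_in_Cons multichain_in_interval_iff)
    with t(1) show "(hd (untag t), tl (untag t)) \<in> fst (Cell n) V1 V2" by (simp add: Cell_def)
  qed
qed

lemma cell_chain_relP:
  assumes disj: "V1 \<inter> V2 = {}" and s: "s \<in> fst (Cell n) V1 V2"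
  shows "cell_chain (\<sigma> ` V1) (\<sigma> ` V2) (snd (Cell n) \<sigma> s) = snd (Cmin (Suc n)) \<sigma> (cell_chain V1 V2 s)"
proof -
  obtain m c where "s = (m, c)" "m \<in> minimals V1 V2" using s by (auto simp: Cell_def)
  then obtain p where sm: "s = (m, c)" "m = {(V1 \<union> V2, p)}" unfolding minimals_iff[OF disj] by blast
  then show ?thesis
    using block_tag_relP[of "m # c" "V1 \<union> V2" p \<sigma>]
    by (simp add: Cell_def snd_Cmin cell_chain_def image_Un)
qed

theorem species_iso_Cell:
  "species_iso (Cell n :: ('a, 'a spp \<times> 'a spp list) species) (Cmin (Suc n))"
proof (rule species_isoI[where \<phi> = cell_chain])
  fix V1 V2 :: "'a set" assume "admissible V1 V2"
  then show "bij_betw (cell_chain V1 V2) (fst (Cell n) V1 V2) (fst (Cmin (Suc n)) V1 V2)"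
    unfolding admissible_def by (intro bij_betw_cell_chain) simp
next
  fix V1 V2 W1 W2 :: "'a set" and \<sigma> s
  assume adm: "admissible V1 V2" and bij: "admissible W1 W2" "bij_betw \<sigma> V1 W1" "bij_betw \<sigma> V2 W2"
    and s: "s \<in> fst (Cell n) V1 V2"
  have disj: "V1 \<inter> V2 = {}" using adm unfolding admissible_def by simp
  show "cell_chain W1 W2 (snd (Cell n) \<sigma> s) = snd (Cmin (Suc n)) \<sigma> (cell_chain V1 V2 s)"
    using cell_chain_relP[OF disj s, of \<sigma>] unfolding bij_betw_admissible(2,3)[OF bij] .
qed

section \<open>Removing the first element\<close>

definition single_point :: "'a spp \<Rightarrow> 'a" where
  "single_point P = the (snd (the_elem P))"

definition point_block :: "'a \<Rightarrow> 'a spp \<Rightarrow> 'a set" where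
  "point_block v P = \<Union>{b. (b, Some v) \<in> P}"

lemma single_point_simps [simp]:
  "single_point {(b, Some v)} = v" "single_point (mpt V1 V2 v) = v"
  by (simp_all add: single_point_def mpt_def)

lemma point_block_eq:
  assumes P: "P \<in> SPP V1 V2" and bv: "(b, Some v) \<in> P"
  shows "point_block v P = b"
proof -
  have "b' = b" if "(b', Some v) \<in> P" for b'
    using SPP_blocks_overlap[OF P that bv] SPP_point[OF P] that bv by blast
  with bv have "{b'. (b', Some v) \<in> P} = {b}" by blast
  then show ?thesis unfolding point_block_def by simp
qed

lemma point_block_relP:
  assumes inj: "inj_on \<sigma> (V1 \<union> V2)" and P: "P \<in> SPP V1 V2" and v: "v \<in> V1"
  shows "point_block (\<sigma> v) (relP \<sigma> P) = \<sigma> ` point_block v P"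
proof -
  have key: "map_option \<sigma> q = Some (\<sigma> v) \<longleftrightarrow> q = Some v" if "(B, q) \<in> P" for B q
  proof (cases q)
    case (Some e)
    with SPP_point[OF P] that have "e \<in> V1 \<union> V2" by blast
    with v Some inj_onD[OF inj, of e v] show ?thesis by auto
  qed simp
  have "(c, Some (\<sigma> v)) \<in> relP \<sigma> P \<longleftrightarrow> (\<exists>b. (b, Some v) \<in> P \<and> c = \<sigma> ` b)" for c
  proof
    assume "(c, Some (\<sigma> v)) \<in> relP \<sigma> P"
    then obtain x where x: "x \<in> P" "(c, Some (\<sigma> v)) = (\<lambda>(B, p). (\<sigma> ` B, map_option \<sigma> p)) x"
      unfolding relP_def by blast
    obtain B q where "x = (B, q)" by (cases x)
    with x have Bq: "(B, q) \<in> P" "c = \<sigma> ` B" "map_option \<sigma> q = Some (\<sigma> v)" by auto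
    with key have "q = Some v" by blast
    with Bq show "\<exists>b. (b, Some v) \<in> P \<and> c = \<sigma> ` b" by blast
  next
    assume "\<exists>b. (b, Some v) \<in> P \<and> c = \<sigma> ` b"
    then obtain b where "(b, Some v) \<in> P" "c = \<sigma> ` b" by blast
    then show "(c, Some (\<sigma> v)) \<in> relP \<sigma> P"
      unfolding relP_def by (intro rev_image_eqI[of "(b, Some v)"]) simp_all
  qed
  then have "{c. (c, Some (\<sigma> v)) \<in> relP \<sigma> P} = (`) \<sigma> ` {b. (b, Some v) \<in> P}"
    by (auto simp: image_iff)
  then show ?thesis unfolding point_block_def by (simp add: image_Union)
qed

lemma Cbul_Suc_carrier:
  assumes disj: "V1 \<inter> V2 = {}" and n: "0 < n"
  shows "cs \<in> fst (Cbul (Suc n)) V1 V2 \<longleftrightarrow>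
     (\<exists>v rest. cs = mpt V1 V2 v # rest \<and> v \<in> V1 \<and> multichain_in (SPP V1 V2) n rest \<and>
               (\<exists>b. (b, Some v) \<in> hd rest))"
proof -
  have "multichain_in (SPP V1 V2) (Suc n) (mpt V1 V2 v # rest) \<longleftrightarrow>
      multichain_in (SPP V1 V2) n rest \<and> (\<exists>b. (b, Some v) \<in> hd rest)" if "v \<in> V1" for v rest
  proof -
    have "multichain_in (SPP V1 V2) (Suc n) (mpt V1 V2 v # rest) \<longleftrightarrow>
        multichain_in (SPP V1 V2) n rest \<and> sp_le (mpt V1 V2 v) (hd rest)"
      using mpt_SPP[OF disj that] n by (simp add: multichain_in_Cons)
    also have "\<dots> \<longleftrightarrow> multichain_in (SPP V1 V2) n rest \<and> (\<exists>b. (b, Some v) \<in> hd rest)"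
      using sp_le_mpt_iff[OF multichain_in_hd(2)[OF _ n]] by (rule conj_cong[OF refl])
    finally show ?thesis .
  qed
  then show ?thesis unfolding Cbul_carrier by (metis list.collapse list.sel(1) list.discI)
qed

definition pointed_split :: "'a set \<Rightarrow> 'a set \<Rightarrow> 'a spp list \<Rightarrow>
    ('a set \<times> 'a set) \<times> 'a spp list \<times> ('a set \<times> ('a spp list + 'a spp list)) set" where
  "pointed_split V1 V2 cs = (let b = point_block (single_point (hd cs)) (hd (tl cs)) in
     ((b \<inter> V1, b \<inter> V2), map (spp_restrict b) (tl cs), {x \<in> chain_decomp (tl cs). fst x \<noteq> b}))"

definition pointed_join :: "nat \<Rightarrow> 'a set \<Rightarrow> 'a set \<Rightarrow>
    ('a set \<times> 'a set) \<times> 'a spp list \<times> ('a set \<times> ('a spp list + 'a spp list)) set \<Rightarrow> 'a spp list" where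
  "pointed_join n V1 V2 x = (case x of ((I1, J1), c, S) \<Rightarrow>
     mpt V1 V2 (single_point (hd c)) # chain_glue n (insert (I1 \<union> J1, Inl c) S))"

lemma pointed_split_carrier:
  assumes disj: "V1 \<inter> V2 = {}" and n: "0 < n" and cs: "cs \<in> fst (Cbul (Suc n)) V1 V2"
  shows "pointed_split V1 V2 cs \<in> fst (sp_prod (Cbul n) (sp_comp_E (Cmin n))) V1 V2"
    and "pointed_join n V1 V2 (pointed_split V1 V2 cs) = cs"
proof -
  obtain v rest b where cs: "cs = mpt V1 V2 v # rest" "v \<in> V1" and mc: "multichain_in (SPP V1 V2) n rest"
    and b: "(b, Some v) \<in> hd rest"
    using cs unfolding Cbul_Suc_carrier[OF disj n] by blast
  have P0: "hd rest \<in> SPP V1 V2" by (rule multichain_in_hd(2)[OF mc n])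
  define c where "c = map (spp_restrict b) rest"
  define S where "S = {x \<in> chain_decomp rest. fst x \<noteq> b}"
  have split: "pointed_split V1 V2 cs = ((b \<inter> V1, b \<inter> V2), c, S)"
    unfolding pointed_split_def c_def S_def cs(1) using point_block_eq[OF P0 b] by simp
  have hd_c: "hd c = {(b, Some v)}" unfolding c_def by (rule multichain_in_restrict(2)[OF n mc b])
  have D: "chain_decomp rest \<in> comp_E_carrier (Cmin n) V1 V2" by (rule chain_decomp_carrier[OF n mc])
  have "(b, Inl c) \<in> chain_decomp rest"
    using b hd_c unfolding chain_decomp_mem c_def by (force simp: block_tag_def)
  then have D_eq: "insert (b, Inl c) S = chain_decomp rest"
    unfolding S_def using D by (intro insert_block_remove) (simp add: comp_E_carrier_def)
  have "b \<notin> fst ` S" unfolding S_def by blast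
  with D D_eq have "b \<subseteq> V1 \<union> V2" "Inl c \<in> fst (Cmin n) (b \<inter> V1) (b \<inter> V2)"
    "S \<in> comp_E_carrier (Cmin n) (V1 - b) (V2 - b)"
    using comp_E_carrier_insert_iff by metis+
  moreover have "V1 - b \<inter> V1 = V1 - b" "V2 - b \<inter> V2 = V2 - b" by blast+
  ultimately show "pointed_split V1 V2 cs \<in> fst (sp_prod (Cbul n) (sp_comp_E (Cmin n))) V1 V2"
    unfolding split sp_prod_carrier by (auto simp: sp_comp_E_def sp_sum_carrier)
  have "b \<inter> V1 \<union> b \<inter> V2 = b" using \<open>b \<subseteq> V1 \<union> V2\<close> by blast
  then show "pointed_join n V1 V2 (pointed_split V1 V2 cs) = cs"
    unfolding split pointed_join_def using hd_c D_eq chain_glue_decomp[OF n mc] cs(1) by simp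
qed

lemma pointed_product_insert:
  assumes disj: "V1 \<inter> V2 = {}"
    and x: "((I1, J1), c, S) \<in> fst (sp_prod (Cbul n) (sp_comp_E (Cmin n))) V1 V2"
  shows "insert (I1 \<union> J1, Inl c) S \<in> comp_E_carrier (Cmin n) V1 V2"
    and "I1 \<union> J1 \<notin> fst ` S" and "(I1 \<union> J1) \<inter> V1 = I1" and "(I1 \<union> J1) \<inter> V2 = J1"
proof -
  define b where "b = I1 \<union> J1"
  have IJ: "I1 \<subseteq> V1" "J1 \<subseteq> V2" and c: "c \<in> fst (Cbul n) I1 J1"
    and S: "S \<in> comp_E_carrier (Cmin n) (V1 - I1) (V2 - J1)"
    using x unfolding sp_prod_carrier by (auto simp: sp_comp_E_def)
  obtain w where w: "w \<in> I1" using c unfolding Cbul_carrier by blast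
  show b_V: "b \<inter> V1 = I1" "b \<inter> V2 = J1" using IJ disj unfolding b_def by auto
  show "b \<notin> fst ` S"
  proof
    assume "b \<in> fst ` S"
    then have "b \<subseteq> \<Union>(fst ` S)" by (rule Union_upper)
    also have "\<Union>(fst ` S) = (V1 - I1) \<union> (V2 - J1)"
      using comp_E_carrier_setpart[OF S] unfolding is_setpart_def by (elim conjE)
    finally show False using w IJ(1) disj unfolding b_def by blast
  qed
  moreover have "b \<noteq> {}" "b \<subseteq> V1 \<union> V2" "Inl c \<in> fst (Cmin n) (b \<inter> V1) (b \<inter> V2)"
    using w IJ c b_V unfolding b_def by (auto simp: sp_sum_carrier)
  moreover have "V1 - I1 = V1 - b" "V2 - J1 = V2 - b" using IJ disj unfolding b_def by auto
  ultimately show "insert (b, Inl c) S \<in> comp_E_carrier (Cmin n) V1 V2"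
    using S by (simp add: comp_E_carrier_insert_iff)
qed

lemma pointed_join_carrier:
  assumes disj: "V1 \<inter> V2 = {}" and n: "0 < n"
    and x: "x \<in> fst (sp_prod (Cbul n) (sp_comp_E (Cmin n))) V1 V2"
  shows "pointed_join n V1 V2 x \<in> fst (Cbul (Suc n)) V1 V2"
    and "pointed_split V1 V2 (pointed_join n V1 V2 x) = x"
proof -
  obtain I1 J1 c S where xe: "x = ((I1, J1), c, S)" by (metis prod.collapse)
  define b where "b = I1 \<union> J1"
  have x': "((I1, J1), c, S) \<in> fst (sp_prod (Cbul n) (sp_comp_E (Cmin n))) V1 V2" using x unfolding xe .
  note b = pointed_product_insert[OF disj x', folded b_def]
  from x' have "I1 \<subseteq> V1" "c \<in> fst (Cbul n) I1 J1" unfolding sp_prod_carrier by auto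
  then obtain w where w: "w \<in> V1" "hd c = {(b, Some w)}"
    unfolding Cbul_carrier b_def mpt_def by blast
  note S' = b(1)
  define rest where "rest = chain_glue n (insert (b, Inl c) S)"
  have mc: "multichain_in (SPP V1 V2) n rest" unfolding rest_def by (rule chain_glue_multichain[OF n S'])
  have dec: "chain_decomp rest = insert (b, Inl c) S" unfolding rest_def by (rule chain_decomp_glue[OF n S'])
  have "(b, Some w) \<in> hd rest" unfolding rest_def hd_chain_glue[OF n S'] using w(2) by force
  moreover have join: "pointed_join n V1 V2 x = mpt V1 V2 w # rest"
    unfolding xe pointed_join_def rest_def b_def using w(2) by simp
  ultimately show "pointed_join n V1 V2 x \<in> fst (Cbul (Suc n)) V1 V2"
    using w(1) mc unfolding Cbul_Suc_carrier[OF disj n] by blast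
  have "point_block w (hd rest) = b"
    using point_block_eq[OF multichain_in_hd(2)[OF mc n] \<open>(b, Some w) \<in> hd rest\<close>] .
  moreover have "map (spp_restrict b) rest = c"
  proof -
    have "(b, block_tag b (map (spp_restrict b) rest)) \<in> chain_decomp rest"
      using \<open>(b, Some w) \<in> hd rest\<close> unfolding chain_decomp_mem by force
    with comp_E_carrier_fst_inj[OF S'] have "block_tag b (map (spp_restrict b) rest) = Inl c"
      unfolding dec by blast
    then show ?thesis by (metis untag_block_tag untag_simps(1))
  qed
  moreover have "{y \<in> chain_decomp rest. fst y \<noteq> b} = S" unfolding dec using b(2) by force
  ultimately show "pointed_split V1 V2 (pointed_join n V1 V2 x) = x"
    unfolding join using b(3,4) by (simp add: pointed_split_def xe)
qed

lemma pointed_split_relP: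
  assumes disj: "V1 \<inter> V2 = {}" and n: "0 < n" and inj: "inj_on \<sigma> (V1 \<union> V2)"
    and cs: "cs \<in> fst (Cbul (Suc n)) V1 V2"
  shows "pointed_split (\<sigma> ` V1) (\<sigma> ` V2) (map (relP \<sigma>) cs) =
         snd (sp_prod (Cbul n) (sp_comp_E (Cmin n))) \<sigma> (pointed_split V1 V2 cs)"
proof -
  obtain v rest b where cs: "cs = mpt V1 V2 v # rest" "v \<in> V1" and mc: "multichain_in (SPP V1 V2) n rest"
    and b: "(b, Some v) \<in> hd rest"
    using cs unfolding Cbul_Suc_carrier[OF disj n] by blast
  have P0: "hd rest \<in> SPP V1 V2" by (rule multichain_in_hd(2)[OF mc n])
  have bV: "b \<subseteq> V1 \<union> V2" by (rule SPP_block_subset[OF P0 b])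
  have "rest \<noteq> []" using multichain_in_length[OF mc] n by auto
  then have "point_block (\<sigma> v) (hd (map (relP \<sigma>) rest)) = \<sigma> ` b"
    using point_block_relP[OF inj P0 cs(2)] point_block_eq[OF P0 b] by (simp add: hd_map)
  then have L: "pointed_split (\<sigma> ` V1) (\<sigma> ` V2) (map (relP \<sigma>) cs) =
      ((\<sigma> ` b \<inter> \<sigma> ` V1, \<sigma> ` b \<inter> \<sigma> ` V2), map (spp_restrict (\<sigma> ` b)) (map (relP \<sigma>) rest),
       {x \<in> chain_decomp (map (relP \<sigma>) rest). fst x \<noteq> \<sigma> ` b})"
    unfolding pointed_split_def cs(1) by (simp add: relP_mpt)
  have R: "snd (sp_prod (Cbul n) (sp_comp_E (Cmin n))) \<sigma> (pointed_split V1 V2 cs) =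
      ((\<sigma> ` (b \<inter> V1), \<sigma> ` (b \<inter> V2)), map (relP \<sigma>) (map (spp_restrict b) rest),
       comp_E_transport (Cmin n) \<sigma> {x \<in> chain_decomp rest. fst x \<noteq> b})"
    unfolding pointed_split_def cs(1) using point_block_eq[OF P0 b]
    by (simp add: snd_sp_prod snd_Cbul sp_comp_E_def)
  have "\<forall>x \<in> chain_decomp rest. fst x \<subseteq> V1 \<union> V2"
    using SPP_block_subset[OF P0] unfolding chain_decomp_def by force
  then have "{x \<in> chain_decomp (map (relP \<sigma>) rest). fst x \<noteq> \<sigma> ` b} =
      comp_E_transport (Cmin n) \<sigma> {x \<in> chain_decomp rest. fst x \<noteq> b}"
    unfolding chain_decomp_relP[OF inj n mc] by (rule comp_E_transport_filter[OF inj bV])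
  moreover have "set rest \<subseteq> SPP V1 V2" using mc unfolding multichain_in_def by blast
  ultimately show ?thesis unfolding L R
    using inj_on_image_Int[OF inj bV, of V1] inj_on_image_Int[OF inj bV, of V2]
      map_spp_restrict_relP[OF inj bV] by simp
qed

theorem species_iso_Cbul:
  assumes n: "0 < n"
  shows "species_iso (Cbul (Suc n) :: ('a, 'a spp list) species) (sp_prod (Cbul n) (sp_comp_E (Cmin n)))"
proof (rule species_isoI[where \<phi> = pointed_split])
  fix V1 V2 :: "'a set" assume "admissible V1 V2"
  then have disj: "V1 \<inter> V2 = {}" unfolding admissible_def by simp
  show "bij_betw (pointed_split V1 V2) (fst (Cbul (Suc n)) V1 V2) (fst (sp_prod (Cbul n) (sp_comp_E (Cmin n))) V1 V2)"
    by (rule bij_betw_byWitness[where f' = "pointed_join n V1 V2"])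
       (use pointed_split_carrier[OF disj n] pointed_join_carrier[OF disj n] in auto)
next
  fix V1 V2 W1 W2 :: "'a set" and \<sigma> s
  assume adm: "admissible V1 V2" and bij: "admissible W1 W2" "bij_betw \<sigma> V1 W1" "bij_betw \<sigma> V2 W2"
    and s: "s \<in> fst (Cbul (Suc n)) V1 V2"
  have disj: "V1 \<inter> V2 = {}" using adm unfolding admissible_def by simp
  note im = bij_betw_admissible[OF bij]
  show "pointed_split W1 W2 (snd (Cbul (Suc n)) \<sigma> s) =
        snd (sp_prod (Cbul n) (sp_comp_E (Cmin n))) \<sigma> (pointed_split V1 V2 s)"
    using pointed_split_relP[OF disj n im(1) s] unfolding im(2,3) snd_Cbul .
qed

lemma Ctimes_Suc_carrier:
  assumes disj: "V1 \<inter> V2 = {}" and n: "0 < n"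
  shows "cs \<in> fst (Ctimes (Suc n)) V1 V2 \<longleftrightarrow>
     (\<exists>rest. cs = mcross V1 V2 # rest \<and> multichain_in (SPP V1 V2) n rest \<and> (\<exists>b. (b, None) \<in> hd rest))"
proof -
  have "multichain_in (SPP V1 V2) (Suc n) (mcross V1 V2 # rest) \<longleftrightarrow>
      multichain_in (SPP V1 V2) n rest \<and> (\<exists>b. (b, None) \<in> hd rest)" for rest
  proof
    assume "multichain_in (SPP V1 V2) (Suc n) (mcross V1 V2 # rest)"
    then have mc: "multichain_in (SPP V1 V2) n rest" and "sp_le (mcross V1 V2) (hd rest)"
      using n by (simp_all add: multichain_in_Cons)
    with sp_le_mcross_iff[OF multichain_in_hd(2)[OF mc n]]
    show "multichain_in (SPP V1 V2) n rest \<and> (\<exists>b. (b, None) \<in> hd rest)" by blast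
  next
    assume rhs: "multichain_in (SPP V1 V2) n rest \<and> (\<exists>b. (b, None) \<in> hd rest)"
    then obtain b where mc: "multichain_in (SPP V1 V2) n rest" and b: "(b, None) \<in> hd rest" by blast
    have P0: "hd rest \<in> SPP V1 V2" by (rule multichain_in_hd(2)[OF mc n])
    with b have "V2 \<noteq> {}" using SPP_unpointed[OF P0 b] SPP_block_subset[OF P0 b] by blast
    then show "multichain_in (SPP V1 V2) (Suc n) (mcross V1 V2 # rest)"
      using mc b mcross_SPP[OF disj] sp_le_mcross_iff[OF P0] n by (auto simp: multichain_in_Cons)
  qed
  then show ?thesis unfolding Ctimes_carrier by (metis list.collapse list.sel(1) list.discI)
qed

definition unpointed_split :: "'a set \<Rightarrow> 'a set \<Rightarrow> 'a spp list \<Rightarrow>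
    ('a set \<times> 'a set) \<times> ('a set \<times> 'a spp list) set \<times> ('a set \<times> 'a spp list) set" where
  "unpointed_split V1 V2 cs = (let D = chain_decomp (tl cs); U = \<Union>(fst ` inr_part D) in
     ((U \<inter> V1, U \<inter> V2), inr_part D, inl_part D))"

definition unpointed_join :: "nat \<Rightarrow> 'a set \<Rightarrow> 'a set \<Rightarrow>
    ('a set \<times> 'a set) \<times> ('a set \<times> 'a spp list) set \<times> ('a set \<times> 'a spp list) set \<Rightarrow> 'a spp list" where
  "unpointed_join n V1 V2 x = (case x of ((I1, J1), S1, S2) \<Rightarrow>
     mcross V1 V2 # chain_glue n (inr_tag S1 \<union> inl_tag S2))"

lemma unpointed_split_carrier:
  assumes disj: "V1 \<inter> V2 = {}" and n: "0 < n" and cs: "cs \<in> fst (Ctimes (Suc n)) V1 V2"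
  shows "unpointed_split V1 V2 cs \<in> fst (sp_prod (sp_comp_E1 (Ctimes n)) (sp_comp_E (Cbul n))) V1 V2"
    and "unpointed_join n V1 V2 (unpointed_split V1 V2 cs) = cs"
proof -
  obtain rest b where cs: "cs = mcross V1 V2 # rest" and mc: "multichain_in (SPP V1 V2) n rest"
    and b: "(b, None) \<in> hd rest"
    using cs unfolding Ctimes_Suc_carrier[OF disj n] by blast
  define D where "D = chain_decomp rest"
  define U where "U = \<Union>(fst ` inr_part D)"
  have split: "unpointed_split V1 V2 cs = ((U \<inter> V1, U \<inter> V2), inr_part D, inl_part D)"
    unfolding unpointed_split_def cs D_def U_def by (simp add: Let_def)
  have D_eq: "inr_tag (inr_part D) \<union> inl_tag (inl_part D) = D" by (rule inr_tag_Un_inl_tag_parts)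
  have "D \<in> comp_E_carrier (Cmin n) V1 V2" unfolding D_def by (rule chain_decomp_carrier[OF n mc])
  then have parts: "inr_part D \<in> comp_E_carrier (Ctimes n) (U \<inter> V1) (U \<inter> V2)"
    "inl_part D \<in> comp_E_carrier (Cbul n) (V1 - U) (V2 - U)"
    unfolding U_def by (subst (asm) D_eq[symmetric], simp add: comp_E_carrier_sum_iff Let_def)+
  have "hd (map (spp_restrict b) rest) = {(b, None)}" by (rule multichain_in_restrict(2)[OF n mc b])
  then have "(b, Inr (map (spp_restrict b) rest)) \<in> D"
    using b unfolding D_def chain_decomp_mem by (force simp: block_tag_def)
  then have "inr_part D \<noteq> {}" unfolding inr_part_def by blast
  moreover have "V1 - U \<inter> V1 = V1 - U" "V2 - U \<inter> V2 = V2 - U" by blast+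
  ultimately show "unpointed_split V1 V2 cs \<in> fst (sp_prod (sp_comp_E1 (Ctimes n)) (sp_comp_E (Cbul n))) V1 V2"
    unfolding split sp_prod_carrier using parts by (auto simp: sp_comp_E_def sp_comp_E1_def)
  show "unpointed_join n V1 V2 (unpointed_split V1 V2 cs) = cs"
    unfolding split unpointed_join_def using D_eq chain_glue_decomp[OF n mc] cs by (simp add: D_def)
qed

lemma unpointed_join_carrier:
  assumes disj: "V1 \<inter> V2 = {}" and n: "0 < n"
    and x: "x \<in> fst (sp_prod (sp_comp_E1 (Ctimes n)) (sp_comp_E (Cbul n))) V1 V2"
  shows "unpointed_join n V1 V2 x \<in> fst (Ctimes (Suc n)) V1 V2"
    and "unpointed_split V1 V2 (unpointed_join n V1 V2 x) = x"
proof -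
  obtain I1 J1 S1 S2 where x: "x = ((I1, J1), S1, S2)" and IJ: "I1 \<subseteq> V1" "J1 \<subseteq> V2"
    and S1: "S1 \<in> comp_E_carrier (Ctimes n) I1 J1" "S1 \<noteq> {}"
    and S2: "S2 \<in> comp_E_carrier (Cbul n) (V1 - I1) (V2 - J1)"
    using x unfolding sp_prod_carrier by (auto simp: sp_comp_E_def sp_comp_E1_def)
  define U where "U = \<Union>(fst ` S1)"
  have "U = I1 \<union> J1" using comp_E_carrier_setpart[OF S1(1)] unfolding U_def is_setpart_def by blast
  then have U: "U \<inter> V1 = I1" "U \<inter> V2 = J1" "V1 - U = V1 - I1" "V2 - U = V2 - J1"
    using IJ disj by auto
  define S where "S = inr_tag S1 \<union> inl_tag S2"
  have S: "S \<in> comp_E_carrier (Cmin n) V1 V2"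
    unfolding S_def comp_E_carrier_sum_iff Let_def U_def[symmetric] U using S1(1) S2 by blast
  define rest where "rest = chain_glue n S"
  have mc: "multichain_in (SPP V1 V2) n rest" unfolding rest_def by (rule chain_glue_multichain[OF n S])
  obtain J c where "(J, c) \<in> S1" using S1(2) by auto
  then have Jc: "(J, Inr c) \<in> S" unfolding S_def inr_tag_def by force
  have "block_tag J c = Inr c" using Cmin_carrier_blockD(4)[OF S Jc] by simp
  then have "(J, None) \<in> hd c" by (simp add: block_tag_def split: if_splits)
  with Jc have "(J, None) \<in> hd rest" unfolding rest_def hd_chain_glue[OF n S] by force
  moreover have join: "unpointed_join n V1 V2 x = mcross V1 V2 # rest"
    unfolding x unpointed_join_def rest_def S_def by simp
  ultimately show "unpointed_join n V1 V2 x \<in> fst (Ctimes (Suc n)) V1 V2"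
    using mc unfolding Ctimes_Suc_carrier[OF disj n] by blast
  have "chain_decomp rest = S" unfolding rest_def by (rule chain_decomp_glue[OF n S])
  then show "unpointed_split V1 V2 (unpointed_join n V1 V2 x) = x"
    unfolding join using U U_def by (simp add: unpointed_split_def x S_def Let_def)
qed

lemma unpointed_split_relP:
  assumes disj: "V1 \<inter> V2 = {}" and n: "0 < n" and inj: "inj_on \<sigma> (V1 \<union> V2)"
    and cs: "cs \<in> fst (Ctimes (Suc n)) V1 V2"
  shows "unpointed_split (\<sigma> ` V1) (\<sigma> ` V2) (map (relP \<sigma>) cs) =
         snd (sp_prod (sp_comp_E1 (Ctimes n)) (sp_comp_E (Cbul n))) \<sigma> (unpointed_split V1 V2 cs)"
proof -
  obtain rest where cs: "cs = mcross V1 V2 # rest" and mc: "multichain_in (SPP V1 V2) n rest"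
    using cs unfolding Ctimes_Suc_carrier[OF disj n] by blast
  define D where "D = chain_decomp rest"
  define U where "U = \<Union>(fst ` inr_part D)"
  have "fst ` inr_part D \<subseteq> fst ` D" unfolding inr_part_def by force
  then have "U \<subseteq> \<Union>(fst ` D)" unfolding U_def by blast
  also have "\<Union>(fst ` D) = V1 \<union> V2"
    unfolding D_def fst_chain_decomp by (rule SPP_Union[OF multichain_in_hd(2)[OF mc n]])
  finally have U: "\<sigma> ` U \<inter> \<sigma> ` V1 = \<sigma> ` (U \<inter> V1)" "\<sigma> ` U \<inter> \<sigma> ` V2 = \<sigma> ` (U \<inter> V2)"
    using inj_on_image_Int[OF inj] by auto
  have "chain_decomp (map (relP \<sigma>) rest) =
      inr_tag (comp_E_transport (Ctimes n) \<sigma> (inr_part D)) \<union> inl_tag (comp_E_transport (Cbul n) \<sigma> (inl_part D))"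
    unfolding chain_decomp_relP[OF inj n mc] D_def[symmetric]
    by (subst inr_tag_Un_inl_tag_parts[of D, symmetric]) (rule comp_E_transport_tags)
  moreover have "\<Union>(fst ` comp_E_transport (Ctimes n) \<sigma> (inr_part D)) = \<sigma> ` U"
    unfolding fst_comp_E_transport U_def by (simp add: image_Union)
  ultimately show ?thesis
    unfolding unpointed_split_def cs using U
    by (simp add: Let_def D_def[symmetric] U_def[symmetric] snd_sp_prod sp_comp_E_def sp_comp_E1_def)
qed

theorem species_iso_Ctimes:
  assumes n: "0 < n"
  shows "species_iso (Ctimes (Suc n) :: ('a, 'a spp list) species)
           (sp_prod (sp_comp_E1 (Ctimes n)) (sp_comp_E (Cbul n)))"
proof (rule species_isoI[where \<phi> = unpointed_split])
  fix V1 V2 :: "'a set" assume "admissible V1 V2"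
  then have disj: "V1 \<inter> V2 = {}" unfolding admissible_def by simp
  show "bij_betw (unpointed_split V1 V2) (fst (Ctimes (Suc n)) V1 V2)
          (fst (sp_prod (sp_comp_E1 (Ctimes n)) (sp_comp_E (Cbul n))) V1 V2)"
    by (rule bij_betw_byWitness[where f' = "unpointed_join n V1 V2"])
       (use unpointed_split_carrier[OF disj n] unpointed_join_carrier[OF disj n] in auto)
next
  fix V1 V2 W1 W2 :: "'a set" and \<sigma> s
  assume adm: "admissible V1 V2" and bij: "admissible W1 W2" "bij_betw \<sigma> V1 W1" "bij_betw \<sigma> V2 W2"
    and s: "s \<in> fst (Ctimes (Suc n)) V1 V2"
  have disj: "V1 \<inter> V2 = {}" using adm unfolding admissible_def by simp
  note im = bij_betw_admissible[OF bij]
  show "unpointed_split W1 W2 (snd (Ctimes (Suc n)) \<sigma> s) =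
        snd (sp_prod (sp_comp_E1 (Ctimes n)) (sp_comp_E (Cbul n))) \<sigma> (unpointed_split V1 V2 s)"
    using unpointed_split_relP[OF disj n im(1) s] unfolding im(2,3) snd_Ctimes .
qed

theorem mainTheorem4:
  shows "(\<forall>k::nat. k \<ge> 2 \<longrightarrow>
            species_iso (Cbul k :: ('a, 'a spp list) species)
                        (sp_prod (Cbul (k - 1)) (sp_comp_E (sp_sum (Cbul (k - 1)) (Ctimes (k - 1))))) \<and>
            species_iso (Ctimes k :: ('a, 'a spp list) species)
                        (sp_prod (sp_comp_E1 (Ctimes (k - 1))) (sp_comp_E (Cbul (k - 1)))) \<and>
            species_iso (Cell (k - 1) :: ('a, 'a spp \<times> 'a spp list) species)
                        (sp_sum (Cbul k) (Ctimes k))) \<and>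
         (\<forall>k::nat. k \<ge> 1 \<longrightarrow>
            species_iso (Ck k :: ('a, 'a spp list) species)
                        (sp_comp_E1 (sp_sum (Cbul k) (Ctimes k))))"
proof (intro conjI allI impI)
  fix k :: nat assume "k \<ge> 2"
  then obtain n where k: "k = Suc n" and n: "0 < n" by (cases k) auto
  show "species_iso (Cbul k :: ('a, 'a spp list) species)
          (sp_prod (Cbul (k - 1)) (sp_comp_E (sp_sum (Cbul (k - 1)) (Ctimes (k - 1)))))"
    using species_iso_Cbul[OF n] unfolding k by simp
  show "species_iso (Ctimes k :: ('a, 'a spp list) species)
          (sp_prod (sp_comp_E1 (Ctimes (k - 1))) (sp_comp_E (Cbul (k - 1))))"
    using species_iso_Ctimes[OF n] unfolding k by simp
  show "species_iso (Cell (k - 1) :: ('a, 'a spp \<times> 'a spp list) species) (sp_sum (Cbul k) (Ctimes k))"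
    using species_iso_Cell unfolding k by simp
next
  fix k :: nat assume "k \<ge> 1"
  then have "0 < k" by simp
  then show "species_iso (Ck k :: ('a, 'a spp list) species) (sp_comp_E1 (sp_sum (Cbul k) (Ctimes k)))"
    by (rule species_iso_Ck)
qed

end
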